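(* In the setting of the context, let $u$ and $v$ be respectively a viscosity subsolution and a viscosity supersolution of $\partial_tw+a(x)\cdot\nabla w=\mathcal{J}w$ on $\Sigma\times(0,\infty)$, with $u(x,0)\le v(x,0)$ for all $x\in\Sigma$. Then $u(x,t)\le v(x,t)$ for all $x\in\Sigma$ and $t>0$.
   Context: $D\ge1$, $\Sigma=\{x\in\mathbb{R}^D: x_k\ge0,\ \sum_{k=1}^Dx_k\le1\}$, $x_0=1-\sum_{k=1}^Dx_k$. $f_0,\dots,f_D:\Sigma\to[0,\infty)$ are Lipschitz, $\bar f(x)=\sum_{k=0}^Dx_kf_k(x)$, $a_k(x)=-(f_k(x)-\bar f(x))x_k$ ($k=1,\dots,D$). With constants $\lambda_{ij}>0$, $\gamma_{ij}\in(0,1]$, \[ \mathcal{J}\phi(x)=\sum_{\substack{i,j=1\\ i\neq j}}^D\lambda_{ij}f_i(x)[\phi(x+\gamma_{ij}x_i(e_j-e_i))-\phi(x)]+\sum_{i=1}^D\lambda_{i0}f_i(x)[\phi(x-\gamma_{i0}x_ie_i)-\phi(x)]+\sum_{j=1}^D\lambda_{0j}f_0(x)[\phi(x+\gamma_{0j}x_0e_j)-\phi(x)] \] (applied in $x$ at fixed $t$). A bounded upper semicontinuous function $w$ on $\Sigma\times[0,\infty)$ is a viscosity subsolution if for every smooth $\phi$ and every $(x,t)\in\Sigma\times(0,\infty)$ at which $w-\phi$ attains a global maximum with $w(x,t)=\phi(x,t)$, one has $\partial_t\phi(x,t)+a(x)\cdot\nabla\phi(x,t)\le\mathcal{J}\phi(x,t)$;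 a bounded lower semicontinuous $w$ is a viscosity supersolution if the analogous condition holds with global minimum and the reverse inequality. *)

theory Defs
  imports "HOL-Analysis.Analysis"
begin

text \<open>The simplex_D Sigma in R^D; coordinates indexed by the finite type 'n (D = CARD('n)).\<close>
definition simplex_D :: "(real^'n) set" where
  "simplex_D = {x. (\<forall>k. x $ k \<ge> 0) \<and> (\<Sum>k\<in>UNIV. x $ k) \<le> 1}"

definition x0 :: "real^'n \<Rightarrow> real" where
  "x0 x = 1 - (\<Sum>k\<in>UNIV. x $ k)"

fun Ck :: "nat \<Rightarrow> ('a::real_normed_vector \<Rightarrow> real) \<Rightarrow> bool" where
  "Ck 0 f = continuous_on UNIV f"
| "Ck (Suc k) f = ((\<forall>p. f differentiable (at p)) \<and>
                    (\<forall>v. Ck k (\<lambda>p. frechet_derivative f (at p) v)))"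

definition smooth :: "('a::real_normed_vector \<Rightarrow> real) \<Rightarrow> bool" where
  "smooth f = (\<forall>k. Ck k f)"

definition usc_on :: "'a::topological_space set \<Rightarrow> ('a \<Rightarrow> real) \<Rightarrow> bool" where
  "usc_on S w = (\<forall>p\<in>S. \<forall>c. w p < c \<longrightarrow> (\<forall>\<^sub>F q in at p within S. w q < c))"

definition lsc_on :: "'a::topological_space set \<Rightarrow> ('a \<Rightarrow> real) \<Rightarrow> bool" where
  "lsc_on S w = (\<forall>p\<in>S. \<forall>c. c < w p \<longrightarrow> (\<forall>\<^sub>F q in at p within S. c < w q))"

text \<open>fbar(x) = sum_{k=0}^D x_k f_k(x); f0 is f_0 and f k is f_k for k in 'n.\<close>
definition fbar :: "(real^'n \<Rightarrow> real) \<Rightarrow> ('n \<Rightarrow> real^'n \<Rightarrow> real) \<Rightarrow> real^'n \<Rightarrow> real" where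
  "fbar f0 f x = x0 x * f0 x + (\<Sum>k\<in>UNIV. x $ k * f k x)"

definition drift :: "(real^'n \<Rightarrow> real) \<Rightarrow> ('n \<Rightarrow> real^'n \<Rightarrow> real) \<Rightarrow> real^'n \<Rightarrow> real^'n" where
  "drift f0 f x = (\<chi> k. - (f k x - fbar f0 f x) * x $ k)"

text \<open>Jump operator. lam i j = lambda_ij (i ~= j), lamO i = lambda_i0, lamI j = lambda_0j;
  similarly gam, gamO, gamI for gamma.\<close>
definition Jop :: "(real^'n \<Rightarrow> real) \<Rightarrow> ('n \<Rightarrow> real^'n \<Rightarrow> real) \<Rightarrow>
    ('n \<Rightarrow> 'n \<Rightarrow> real) \<Rightarrow> ('n \<Rightarrow> real) \<Rightarrow> ('n \<Rightarrow> real) \<Rightarrow>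
    ('n \<Rightarrow> 'n \<Rightarrow> real) \<Rightarrow> ('n \<Rightarrow> real) \<Rightarrow> ('n \<Rightarrow> real) \<Rightarrow>
    (real^'n \<Rightarrow> real) \<Rightarrow> real^'n \<Rightarrow> real" where
  "Jop f0 f lam lamO lamI gam gamO gamI \<phi> x =
     (\<Sum>i\<in>UNIV. \<Sum>j\<in>UNIV - {i}. lam i j * f i x *
         (\<phi> (x + (gam i j * x $ i) *\<^sub>R (axis j 1 - axis i 1)) - \<phi> x))
   + (\<Sum>i\<in>UNIV. lamO i * f i x * (\<phi> (x - (gamO i * x $ i) *\<^sub>R axis i 1) - \<phi> x))
   + (\<Sum>j\<in>UNIV. lamI j * f0 x * (\<phi> (x + (gamI j * x0 x) *\<^sub>R axis j 1) - \<phi> x))"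

definition dom_st :: "((real^'n) \<times> real) set" where
  "dom_st = simplex_D \<times> {0..}"

definition visc_sub where
  "visc_sub f0 f lam lamO lamI gam gamO gamI (w :: (real^'n) \<times> real \<Rightarrow> real) \<longleftrightarrow>
     bounded (w ` dom_st) \<and> usc_on dom_st w \<and>
     (\<forall>\<phi> x t. smooth \<phi> \<and> x \<in> simplex_D \<and> t > 0 \<and> w (x, t) = \<phi> (x, t) \<and>
        (\<forall>p\<in>dom_st. w p - \<phi> p \<le> w (x, t) - \<phi> (x, t)) \<longrightarrow>
        frechet_derivative \<phi> (at (x, t)) (0, 1)
          + frechet_derivative \<phi> (at (x, t)) (drift f0 f x, 0)
        \<le> Jop f0 f lam lamO lamI gam gamO gamI (\<lambda>y. \<phi> (y, t)) x)"

definition visc_super where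
  "visc_super f0 f lam lamO lamI gam gamO gamI (w :: (real^'n) \<times> real \<Rightarrow> real) \<longleftrightarrow>
     bounded (w ` dom_st) \<and> lsc_on dom_st w \<and>
     (\<forall>\<phi> x t. smooth \<phi> \<and> x \<in> simplex_D \<and> t > 0 \<and> w (x, t) = \<phi> (x, t) \<and>
        (\<forall>p\<in>dom_st. w p - \<phi> p \<ge> w (x, t) - \<phi> (x, t)) \<longrightarrow>
        frechet_derivative \<phi> (at (x, t)) (0, 1)
          + frechet_derivative \<phi> (at (x, t)) (drift f0 f x, 0)
        \<ge> Jop f0 f lam lamO lamI gam gamO gamI (\<lambda>y. \<phi> (y, t)) x)"

end

theory Submission
  imports Defs
begin

text \<open>Doubling of variables. If \<open>u - v\<close> were positive somewhere, maximize
  \<open>u p - v q - |p - q|\<^sup>2 / (2 \<epsilon>) - \<eta> (t_p + t_q)\<close> over pairs of space-time points. At a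
  maximum, \<open>u\<close> and \<open>v\<close> are touched by quadratic test functions, and the viscosity inequalities
  give \<open>2 \<eta> \<le> (J u - J v) - \<langle>x - y, a x - a y\<rangle> / \<epsilon>\<close>, with the jump terms evaluated on \<open>u, v\<close>
  themselves. Maximality at the jump targets and the Lipschitz bounds on the rates and on the
  drift bound the right-hand side by \<open>C (|p - q|\<^sup>2 / \<epsilon> + |x - y|)\<close>, which tends to \<open>0\<close> as
  \<open>\<epsilon> \<rightarrow> 0\<close>, while the initial inequality keeps the limiting maximum point at positive times.\<close>

lemma frechet_derivative_add_at:
  assumes "f differentiable at p" "g differentiable at p"
  shows "frechet_derivative (\<lambda>p. f p + g p) (at p)
           = (\<lambda>v. frechet_derivative f (at p) v + frechet_derivative g (at p) v)"
  by (rule frechet_derivative_at[symmetric], intro has_derivative_add)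
     (use assms in \<open>simp_all add: frechet_derivative_works[symmetric]\<close>)

lemma frechet_derivative_mult_at:
  fixes f g :: "'a::real_normed_vector \<Rightarrow> real"
  assumes "f differentiable at p" "g differentiable at p"
  shows "frechet_derivative (\<lambda>p. f p * g p) (at p)
           = (\<lambda>v. f p * frechet_derivative g (at p) v + frechet_derivative f (at p) v * g p)"
  by (rule frechet_derivative_at[symmetric], intro has_derivative_mult)
     (use assms in \<open>simp_all add: frechet_derivative_works[symmetric]\<close>)

lemma frechet_derivative_const_at: "frechet_derivative (\<lambda>p. c) (at p) = (\<lambda>v. 0)"
  by (rule frechet_derivative_at[symmetric]) simp

lemma Ck_const: "Ck k (\<lambda>p. c)"
  by (induction k arbitrary: c) (simp_all add: frechet_derivative_const_at)

lemma Ck_Suc_imp_Ck: "Ck (Suc k) f \<Longrightarrow> Ck k f"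
proof (induction k arbitrary: f)
  case 0
  then show ?case
    by (simp add: differentiable_imp_continuous_within continuous_at_imp_continuous_on)
qed simp

lemma Ck_add: "Ck k f \<Longrightarrow> Ck k g \<Longrightarrow> Ck k (\<lambda>p. f p + g p)"
proof (induction k arbitrary: f g)
  case 0 then show ?case by (simp add: continuous_on_add)
next
  case (Suc k)
  have d: "\<And>p. f differentiable at p" "\<And>p. g differentiable at p" using Suc.prems by simp_all
  show ?case using Suc.prems Suc.IH by (simp add: d frechet_derivative_add_at differentiable_add)
qed

lemma Ck_mult:
  fixes f g :: "'a::real_normed_vector \<Rightarrow> real"
  shows "Ck k f \<Longrightarrow> Ck k g \<Longrightarrow> Ck k (\<lambda>p. f p * g p)"
proof (induction k arbitrary: f g)
  case 0 then show ?case by (simp add: continuous_on_mult)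
next
  case (Suc k)
  have d: "\<And>p. f differentiable at p" "\<And>p. g differentiable at p" using Suc.prems by simp_all
  have fk: "Ck k f" "Ck k g" using Suc.prems Ck_Suc_imp_Ck by blast+
  have "Ck k (\<lambda>p. f p * frechet_derivative g (at p) v + frechet_derivative f (at p) v * g p)" for v
  proof -
    have "Ck k (\<lambda>p. frechet_derivative g (at p) v)" "Ck k (\<lambda>p. frechet_derivative f (at p) v)"
      using Suc.prems by simp_all
    with fk show ?thesis by (intro Ck_add Suc.IH)
  qed
  then show ?case by (simp add: d frechet_derivative_mult_at differentiable_mult)
qed

lemma Ck_cmult: "Ck k f \<Longrightarrow> Ck k (\<lambda>p. c * f p)"
  using Ck_mult[OF Ck_const] by blast

lemma Ck_diff: "Ck k f \<Longrightarrow> Ck k g \<Longrightarrow> Ck k (\<lambda>p. f p - g p)"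
  using Ck_add[of k f "\<lambda>p. (-1) * g p"] Ck_cmult[of k g "-1"] by simp

lemma Ck_sum: "finite S \<Longrightarrow> (\<And>i. i \<in> S \<Longrightarrow> Ck k (f i)) \<Longrightarrow> Ck k (\<lambda>p. \<Sum>i\<in>S. f i p)"
proof (induction S rule: finite_induct)
  case (insert x F) then show ?case using Ck_add[of k "f x" "\<lambda>p. \<Sum>i\<in>F. f i p"] by simp
qed (simp add: Ck_const)

lemma Ck_prod:
  fixes f :: "'i \<Rightarrow> 'a::real_normed_vector \<Rightarrow> real"
  shows "finite S \<Longrightarrow> (\<And>i. i \<in> S \<Longrightarrow> Ck k (f i)) \<Longrightarrow> Ck k (\<lambda>p. \<Prod>i\<in>S. f i p)"
proof (induction S rule: finite_induct)
  case (insert x F) then show ?case using Ck_mult[of k "f x" "\<lambda>p. \<Prod>i\<in>F. f i p"] by simp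
qed (simp add: Ck_const)

lemma Ck_affine:
  assumes "bounded_linear l"
  shows "Ck k (\<lambda>p. l p + (c::real))"
proof (cases k)
  case 0 then show ?thesis
    by (simp add: continuous_on_add linear_continuous_on assms)
next
  case (Suc k')
  have "((\<lambda>p. l p + c) has_derivative l) (at p)" for p
    using has_derivative_add[OF bounded_linear_imp_has_derivative[OF assms] has_derivative_const[of c]]
    by simp
  then have "frechet_derivative (\<lambda>p. l p + c) (at p) = l" "(\<lambda>p. l p + c) differentiable at p" for p
    by (auto simp: frechet_derivative_at[symmetric] differentiable_def)
  then show ?thesis using Suc by (simp add: Ck_const)
qed

lemma has_derivative_inner_self_diff:
  fixes c :: "'a::real_inner"
  shows "((\<lambda>p. inner (p - c) (p - c)) has_derivative (\<lambda>v. 2 * inner (p - c) v)) (at p)"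
proof -
  have "((\<lambda>p. inner (p - c) (p - c)) has_derivative (\<lambda>v. inner (p - c) v + inner v (p - c))) (at p)"
    using has_derivative_inner[OF has_derivative_diff[OF has_derivative_ident has_derivative_const]
                                  has_derivative_diff[OF has_derivative_ident has_derivative_const]]
    by simp
  moreover have "(\<lambda>v. inner (p - c) v + inner v (p - c)) = (\<lambda>v. 2 * inner (p - c) v)"
    by (simp add: fun_eq_iff inner_commute[of _ "p - c"])
  ultimately show ?thesis by simp
qed

lemma Ck_inner_self_diff: "Ck k (\<lambda>p. inner (p - c) (p - (c::'a::real_inner)))"
proof (cases k)
  case 0 then show ?thesis
    by (simp add: continuous_on_inner continuous_on_diff)
next
  case (Suc k')
  have "frechet_derivative (\<lambda>p. inner (p - c) (p - c)) (at p) = (\<lambda>v. 2 * inner (p - c) v)"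
    and "(\<lambda>p. inner (p - c) (p - c)) differentiable at p" for p
    using has_derivative_inner_self_diff[of c p]
    by (auto simp: frechet_derivative_at[symmetric] differentiable_def)
  moreover have "Ck k' (\<lambda>p. 2 * inner (p - c) v)" for v
  proof -
    have "bounded_linear (\<lambda>p. 2 * inner p v)"
      by (intro bounded_linear_const_mult bounded_linear_inner_left)
    from Ck_affine[OF this, of k' "- 2 * inner c v"] show ?thesis
      by (simp add: inner_diff_left algebra_simps)
  qed
  ultimately show ?thesis using Suc by simp
qed

lemma smooth_Ck: "smooth f \<Longrightarrow> Ck k f"
  by (simp add: smooth_def)

lemma smooth_differentiable: "smooth f \<Longrightarrow> f differentiable at p"
  using smooth_Ck[of f "Suc 0"] by simp

lemma smooth_continuous_on: "smooth f \<Longrightarrow> continuous_on UNIV f"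
  using smooth_Ck[of f 0] by simp

lemma lsc_on_uminus: "lsc_on A w \<Longrightarrow> usc_on A (\<lambda>p. - w p)"
  unfolding usc_on_def lsc_on_def
  by (metis (no_types, lifting) eventually_mono minus_less_iff)

lemma usc_on_ball:
  fixes w :: "'a::metric_space \<Rightarrow> real"
  assumes "usc_on A w" "q \<in> A" "e > 0"
  shows "\<exists>d>0. \<forall>p\<in>A. dist p q < d \<longrightarrow> w p < w q + e"
proof -
  have "\<forall>\<^sub>F p in at q within A. w p < w q + e" using assms unfolding usc_on_def by auto
  then obtain d where "d > 0" "\<forall>p\<in>A. 0 < dist p q \<and> dist p q < d \<longrightarrow> w p < w q + e"
    unfolding eventually_at by auto
  then show ?thesis using assms(3) by (metis dist_pos_lt less_add_same_cancel1)
qed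

lemma usc_on_tendsto:
  fixes w :: "'a::metric_space \<Rightarrow> real"
  assumes "usc_on A w" "p \<in> A" "(X \<longlongrightarrow> p) F" "\<forall>\<^sub>F n in F. X n \<in> A" "e > 0"
  shows "\<forall>\<^sub>F n in F. w (X n) < w p + e"
proof -
  obtain d where d: "d > 0" "\<forall>q\<in>A. dist q p < d \<longrightarrow> w q < w p + e"
    using usc_on_ball[OF assms(1,2,5)] by blast
  have "\<forall>\<^sub>F n in F. dist (X n) p < d" using assms(3) d(1) tendsto_iff by blast
  with assms(4) show ?thesis by eventually_elim (use d in blast)
qed

lemma lsc_on_tendsto:
  fixes w :: "'a::metric_space \<Rightarrow> real"
  assumes "lsc_on A w" "p \<in> A" "(X \<longlongrightarrow> p) F" "\<forall>\<^sub>F n in F. X n \<in> A" "e > 0"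
  shows "\<forall>\<^sub>F n in F. w p - e < w (X n)"
  using usc_on_tendsto[OF lsc_on_uminus[OF assms(1)] assms(2-5)] by (rule eventually_mono) auto

definition bump_poly :: "'a::real_inner set \<Rightarrow> 'a \<Rightarrow> real \<Rightarrow> 'a \<Rightarrow> 'a \<Rightarrow> real" where
  "bump_poly S p0 r q p = inner (p - p0) (p - p0) * (\<Prod>q'\<in>S - {q}. inner (p - q') (p - q'))
                            * (r\<^sup>2 - inner (p - q) (p - q))"

definition bump_height :: "'a::real_inner set \<Rightarrow> 'a \<Rightarrow> real \<Rightarrow> 'a \<Rightarrow> real" where
  "bump_height S p0 r q = (norm (q - p0) + r)\<^sup>2 * (\<Prod>q'\<in>S - {q}. (norm (q - q') + r)\<^sup>2)"

lemma Ck_bump_poly: "finite S \<Longrightarrow> Ck k (bump_poly S p0 r q)"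
  unfolding bump_poly_def[abs_def]
  by (intro Ck_mult Ck_prod Ck_diff Ck_const Ck_inner_self_diff) simp

lemma bump_poly_has_derivative_zero:
  assumes "finite S"
  shows "(bump_poly S p0 r q has_derivative (\<lambda>v. 0)) (at p0)"
proof -
  define H where "H p = (\<Prod>q'\<in>S - {q}. inner (p - q') (p - q')) * (r\<^sup>2 - inner (p - q) (p - q))" for p
  have "Ck (Suc 0) H"
    unfolding H_def[abs_def] using assms
    by (intro Ck_mult Ck_prod Ck_diff Ck_const Ck_inner_self_diff) simp
  then obtain H' where "(H has_derivative H') (at p0)" by (auto simp: differentiable_def)
  from has_derivative_mult[OF has_derivative_inner_self_diff[of p0 p0] this]
  show ?thesis by (simp add: bump_poly_def[abs_def] H_def mult.assoc)
qed

lemma bump_poly_nonpos: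
  assumes "0 \<le> r" "r \<le> norm (p - q)"
  shows "bump_poly S p0 r q p \<le> 0"
proof -
  have "r\<^sup>2 \<le> inner (p - q) (p - q)"
    using assms by (simp add: power2_norm_eq_inner[symmetric] power_mono)
  then show ?thesis
    unfolding bump_poly_def by (intro mult_nonneg_nonpos mult_nonneg_nonneg prod_nonneg) auto
qed

lemma bump_poly_le_height:
  assumes "norm (p - q) < r"
  shows "bump_poly S p0 r q p \<le> bump_height S p0 r q * r\<^sup>2"
proof -
  have sq_le: "inner (p - c) (p - c) \<le> (norm (q - c) + r)\<^sup>2" for c
  proof -
    have "norm (p - c) \<le> norm (q - c) + r"
      using norm_triangle_ineq[of "p - q" "q - c"] assms by simp
    then show ?thesis by (simp add: power2_norm_eq_inner[symmetric] power_mono)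
  qed
  have "inner (p - p0) (p - p0) * (\<Prod>q'\<in>S - {q}. inner (p - q') (p - q')) \<le> bump_height S p0 r q"
    unfolding bump_height_def
    by (intro mult_mono prod_mono conjI sq_le prod_nonneg) auto
  moreover have "0 \<le> bump_height S p0 r q"
    unfolding bump_height_def by (intro mult_nonneg_nonneg prod_nonneg) auto
  moreover have "0 \<le> r\<^sup>2 - inner (p - q) (p - q)" "r\<^sup>2 - inner (p - q) (p - q) \<le> r\<^sup>2"
    using assms by (simp_all add: power2_norm_eq_inner[symmetric] power_mono)
  ultimately show ?thesis
    unfolding bump_poly_def by (intro mult_mono) (auto intro: prod_nonneg)
qed

lemma bump_poly_vanishes:
  assumes "finite S" "q' \<in> S" "q' \<noteq> q"
  shows "bump_poly S p0 r q q' = 0"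
  unfolding bump_poly_def using assms by (subst prod_zero) auto

lemma bump_poly_center: "bump_poly S p0 r q q = bump_height S p0 0 q * r\<^sup>2"
  by (simp add: bump_poly_def bump_height_def power2_norm_eq_inner[symmetric] norm_minus_commute
                power_mult_distrib prod_power_distrib)

lemma bump_height_pos:
  assumes "finite S" "p0 \<notin> S" "q \<in> S" "0 \<le> r"
  shows "0 < bump_height S p0 r q"
  unfolding bump_height_def using assms
  by (auto intro!: prod_pos mult_pos_pos simp: add_nonneg_eq_0_iff)

lemma bump_radius_exists:
  fixes w \<phi>0 :: "'a::real_inner \<Rightarrow> real"
  assumes usc: "usc_on A w" and cont: "continuous_on UNIV \<phi>0"
    and fin: "finite S" and SA: "S \<subseteq> A" and p0: "p0 \<notin> S" and \<delta>: "\<delta> > 0"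
  obtains r where "r > 0"
    "\<forall>q\<in>S. \<forall>p\<in>A. norm (p - q) < r \<longrightarrow> w p < w q + \<delta> \<and> \<phi>0 q - \<delta> < \<phi>0 p"
    "\<forall>q\<in>S. c q * (1 - bump_height S p0 0 q / bump_height S p0 r q) < \<delta>"
    "\<forall>q\<in>S. \<forall>q'\<in>S. q \<noteq> q' \<longrightarrow> 2 * r < norm (q - q')"
proof -
  have small: "\<forall>\<^sub>F r in at_right 0. r < d" if "d > 0" for d :: real
    using order_tendstoD(2)[OF tendsto_ident_at that] .
  have local: "\<forall>\<^sub>F r in at_right 0. \<forall>q\<in>S. \<forall>p\<in>A. norm (p - q) < r \<longrightarrow> w p < w q + \<delta> \<and> \<phi>0 q - \<delta> < \<phi>0 p"
  proof (rule eventually_ball_finite[OF fin], rule ballI)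
    fix q assume q: "q \<in> S"
    obtain d1 where d1: "d1 > 0" "\<forall>p\<in>A. dist p q < d1 \<longrightarrow> w p < w q + \<delta>"
      using usc_on_ball[OF usc, of q \<delta>] q SA \<delta> by auto
    have "isCont \<phi>0 q" using cont continuous_on_eq_continuous_at by blast
    then obtain d2 where d2: "d2 > 0" "\<forall>p. dist p q < d2 \<longrightarrow> dist (\<phi>0 p) (\<phi>0 q) < \<delta>"
      using \<delta> unfolding continuous_at_eps_delta by (metis dist_commute)
    have "\<forall>\<^sub>F r in at_right 0. r < min d1 d2" using d1(1) d2(1) by (intro small) simp
    then show "\<forall>\<^sub>F r in at_right 0. \<forall>p\<in>A. norm (p - q) < r \<longrightarrow> w p < w q + \<delta> \<and> \<phi>0 q - \<delta> < \<phi>0 p"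
      by (rule eventually_mono) (use d1(2) d2(2) in \<open>force simp: dist_norm abs_diff_less_iff\<close>)
  qed
  have ratio: "\<forall>\<^sub>F r in at_right 0. \<forall>q\<in>S. c q * (1 - bump_height S p0 0 q / bump_height S p0 r q) < \<delta>"
  proof (rule eventually_ball_finite[OF fin], rule ballI)
    fix q assume q: "q \<in> S"
    have "((\<lambda>r. bump_height S p0 r q) \<longlongrightarrow> bump_height S p0 0 q) (at_right 0)"
      unfolding bump_height_def by (intro tendsto_intros)
    then have "((\<lambda>r. c q * (1 - bump_height S p0 0 q / bump_height S p0 r q))
                 \<longlongrightarrow> c q * (1 - bump_height S p0 0 q / bump_height S p0 0 q)) (at_right 0)"
      using bump_height_pos[OF fin p0 q order_refl] by (intro tendsto_intros) auto
    then have "((\<lambda>r. c q * (1 - bump_height S p0 0 q / bump_height S p0 r q)) \<longlongrightarrow> 0) (at_right 0)"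
      using bump_height_pos[OF fin p0 q order_refl] by simp
    then show "\<forall>\<^sub>F r in at_right 0. c q * (1 - bump_height S p0 0 q / bump_height S p0 r q) < \<delta>"
      using \<delta> by (rule order_tendstoD)
  qed
  have separated: "\<forall>\<^sub>F r in at_right 0. \<forall>q\<in>S. \<forall>q'\<in>S. q \<noteq> q' \<longrightarrow> 2 * r < norm (q - q')"
  proof (intro eventually_ball_finite[OF fin] ballI)
    fix q q' assume "q \<in> S" "q' \<in> S"
    show "\<forall>\<^sub>F r in at_right 0. q \<noteq> q' \<longrightarrow> 2 * r < norm (q - q')"
    proof (cases "q = q'")
      case False
      then have "\<forall>\<^sub>F r in at_right 0. r < norm (q - q') / 2" by (intro small) simp
      then show ?thesis by (rule eventually_mono) simp
    qed simp
  qed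
  have pos: "\<forall>\<^sub>F r in at_right (0::real). 0 < r" by (rule eventually_at_right_less)
  have "\<forall>\<^sub>F r in at_right 0. 0 < r
      \<and> (\<forall>q\<in>S. \<forall>p\<in>A. norm (p - q) < r \<longrightarrow> w p < w q + \<delta> \<and> \<phi>0 q - \<delta> < \<phi>0 p)
      \<and> (\<forall>q\<in>S. c q * (1 - bump_height S p0 0 q / bump_height S p0 r q) < \<delta>)
      \<and> (\<forall>q\<in>S. \<forall>q'\<in>S. q \<noteq> q' \<longrightarrow> 2 * r < norm (q - q'))"
    by (intro eventually_conj pos local ratio separated)
  from eventually_happens'[OF trivial_limit_at_right_real this] show ?thesis
    by (-, elim exE conjE) (rule that; assumption)
qed

lemma weighted_bump_sum_le:
  assumes fin: "finite S" and r: "r > 0"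
    and sep: "\<forall>q\<in>S. \<forall>q'\<in>S. q \<noteq> q' \<longrightarrow> 2 * r < norm (q - q')"
    and \<alpha>: "\<And>q. q \<in> S \<Longrightarrow> \<alpha> q \<ge> 0" and q: "q \<in> S" and pq: "norm (p - q) < r"
  shows "(\<Sum>q'\<in>S. \<alpha> q' * bump_poly S p0 r q' p) \<le> \<alpha> q * (bump_height S p0 r q * r\<^sup>2)"
proof -
  have "\<alpha> q' * bump_poly S p0 r q' p \<le> 0" if q': "q' \<in> S - {q}" for q'
  proof -
    have "norm (q - q') \<le> norm (p - q) + norm (p - q')"
      using norm_triangle_ineq[of "q - p" "p - q'"] by (simp add: norm_minus_commute)
    then have "r \<le> norm (p - q')" using sep q q' pq by force
    with q' \<alpha> r show ?thesis by (simp add: mult_nonneg_nonpos bump_poly_nonpos)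
  qed
  then have "(\<Sum>q'\<in>S. \<alpha> q' * bump_poly S p0 r q' p) \<le> \<alpha> q * bump_poly S p0 r q p + 0"
    using fin q by (simp add: sum.remove sum_nonpos del: Diff_iff)
  also have "\<dots> \<le> \<alpha> q * (bump_height S p0 r q * r\<^sup>2)"
    using bump_poly_le_height[OF pq] \<alpha>[OF q] by (simp add: mult_left_mono)
  finally show ?thesis .
qed

lemma weighted_bump_sum_at:
  assumes "finite S" "q \<in> S"
  shows "(\<Sum>q'\<in>S. \<alpha> q' * bump_poly S p0 r q' q) = \<alpha> q * (bump_height S p0 0 q * r\<^sup>2)"
proof -
  have "(\<Sum>q'\<in>S - {q}. \<alpha> q' * bump_poly S p0 r q' q) = 0"
    using assms by (intro sum.neutral) (auto intro: bump_poly_vanishes)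
  with assms show ?thesis by (simp add: sum.remove bump_poly_center)
qed

text \<open>The majorant is \<open>\<phi>0\<close> lowered by weighted polynomial bumps around the points of \<open>S\<close>;
  since the bumps vanish to second order at \<open>p0\<close>, the first-order jet there is unchanged.\<close>

lemma smooth_majorant_close_on_finite:
  fixes w \<phi>0 :: "'a::real_inner \<Rightarrow> real"
  assumes usc: "usc_on A w" and sm: "smooth \<phi>0" and le: "\<forall>p\<in>A. w p \<le> \<phi>0 p"
    and fin: "finite S" and SA: "S \<subseteq> A" and p0: "p0 \<notin> S" and \<delta>: "\<delta> > 0"
  obtains \<phi> where "smooth \<phi>" "\<phi> p0 = \<phi>0 p0"
    "frechet_derivative \<phi> (at p0) = frechet_derivative \<phi>0 (at p0)"
    "\<forall>p\<in>A. w p \<le> \<phi> p" "\<forall>q\<in>S. \<phi> q \<le> w q + \<delta>"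
proof -
  define g where "g q = max 0 (\<phi>0 q - w q - \<delta>/2)" for q
  obtain r where r: "r > 0"
    and near: "\<forall>q\<in>S. \<forall>p\<in>A. norm (p - q) < r \<longrightarrow> w p < w q + \<delta>/4 \<and> \<phi>0 q - \<delta>/4 < \<phi>0 p"
    and ratio: "\<forall>q\<in>S. g q * (1 - bump_height S p0 0 q / bump_height S p0 r q) < \<delta>/4"
    and sep: "\<forall>q\<in>S. \<forall>q'\<in>S. q \<noteq> q' \<longrightarrow> 2 * r < norm (q - q')"
    using bump_radius_exists[OF usc smooth_continuous_on[OF sm] fin SA p0, of "\<delta>/4" g] \<delta> by auto
  define \<alpha> where "\<alpha> q = g q / (bump_height S p0 r q * r\<^sup>2)" for q
  define \<phi> where "\<phi> p = \<phi>0 p - (\<Sum>q\<in>S. \<alpha> q * bump_poly S p0 r q p)" for p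
  have height_pos: "0 < bump_height S p0 r q * r\<^sup>2" if "q \<in> S" for q
    using bump_height_pos[OF fin p0 that] r by simp
  have \<alpha>_nonneg: "\<alpha> q \<ge> 0" if "q \<in> S" for q
    using height_pos[OF that] by (simp add: \<alpha>_def g_def)
  have \<alpha>_height: "\<alpha> q * (bump_height S p0 r q * r\<^sup>2) = g q" if "q \<in> S" for q
    using bump_height_pos[OF fin p0 that, of r] r unfolding \<alpha>_def by simp
  have "smooth \<phi>"
    unfolding smooth_def \<phi>_def[abs_def]
    by (auto intro!: Ck_diff Ck_sum Ck_cmult Ck_bump_poly fin smooth_Ck[OF sm])
  moreover have "\<phi> p0 = \<phi>0 p0" by (simp add: \<phi>_def bump_poly_def)
  moreover have "frechet_derivative \<phi> (at p0) = frechet_derivative \<phi>0 (at p0)"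
  proof -
    have "(\<phi> has_derivative (\<lambda>v. frechet_derivative \<phi>0 (at p0) v - (\<Sum>q\<in>S. \<alpha> q * 0))) (at p0)"
      unfolding \<phi>_def[abs_def]
      by (intro has_derivative_diff has_derivative_sum has_derivative_mult_right
          bump_poly_has_derivative_zero fin
          frechet_derivative_works[THEN iffD1, OF smooth_differentiable[OF sm]])
    then show ?thesis by (simp add: frechet_derivative_at[symmetric])
  qed
  moreover have "w p \<le> \<phi> p" if p: "p \<in> A" for p
  proof (cases "\<exists>q\<in>S. norm (p - q) < r")
    case True
    then obtain q where q: "q \<in> S" "norm (p - q) < r" by blast
    have "(\<Sum>q'\<in>S. \<alpha> q' * bump_poly S p0 r q' p) \<le> \<alpha> q * (bump_height S p0 r q * r\<^sup>2)"
      by (rule weighted_bump_sum_le[OF fin r sep]) (use \<alpha>_nonneg q in auto)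
    then have "(\<Sum>q'\<in>S. \<alpha> q' * bump_poly S p0 r q' p) \<le> g q"
      using \<alpha>_height[OF q(1)] by simp
    moreover have "w p \<le> \<phi>0 p - g q"
      using le p near q unfolding g_def by force
    ultimately show ?thesis by (simp add: \<phi>_def)
  next
    case False
    then have "\<alpha> q * bump_poly S p0 r q p \<le> 0" if "q \<in> S" for q
      using that r \<alpha>_nonneg[OF that] by (intro mult_nonneg_nonpos bump_poly_nonpos) auto
    then have "(\<Sum>q\<in>S. \<alpha> q * bump_poly S p0 r q p) \<le> 0" by (simp add: sum_nonpos)
    moreover have "w p \<le> \<phi>0 p" using le p by blast
    ultimately show ?thesis by (simp add: \<phi>_def)
  qed
  moreover have "\<phi> q \<le> w q + \<delta>" if q: "q \<in> S" for q
  proof -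
    have "(\<Sum>q'\<in>S. \<alpha> q' * bump_poly S p0 r q' q) = \<alpha> q * (bump_height S p0 0 q * r\<^sup>2)"
      by (rule weighted_bump_sum_at[OF fin q])
    also have "\<dots> = g q - g q * (1 - bump_height S p0 0 q / bump_height S p0 r q)"
      using bump_height_pos[OF fin p0 q, of r] r by (simp add: \<alpha>_def algebra_simps)
    finally have "\<phi> q = \<phi>0 q - g q + g q * (1 - bump_height S p0 0 q / bump_height S p0 r q)"
      by (simp add: \<phi>_def)
    with ratio q \<delta> show ?thesis by (force simp: g_def)
  qed
  ultimately show ?thesis using that by blast
qed

lemma simplex_D_component_bounds:
  assumes "x \<in> simplex_D"
  shows "0 \<le> x $ k" "x $ k \<le> 1"
proof -
  have nonneg: "\<forall>k. 0 \<le> x $ k" and sum: "(\<Sum>k\<in>UNIV. x $ k) \<le> 1"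
    using assms by (auto simp: simplex_D_def)
  have "x $ k \<le> (\<Sum>k\<in>UNIV. x $ k)" using nonneg by (intro member_le_sum) auto
  then show "0 \<le> x $ k" "x $ k \<le> 1" using nonneg sum by auto
qed

lemma x0_bounds: "x \<in> simplex_D \<Longrightarrow> 0 \<le> x0 x \<and> x0 x \<le> 1"
  using simplex_D_component_bounds by (auto simp: simplex_D_def x0_def intro!: sum_nonneg)

lemma simplex_D_norm_le_1: "x \<in> simplex_D \<Longrightarrow> norm x \<le> 1"
  using norm_le_l1_cart[of x] simplex_D_component_bounds(1)[of x] by (simp add: simplex_D_def)

lemma compact_simplex_D: "compact (simplex_D :: (real^'n) set)"
proof -
  have "simplex_D = {x::real^'n. \<forall>k. 0 \<le> x $ k} \<inter> {x. (\<Sum>k\<in>UNIV. x $ k) \<le> 1}"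
    by (auto simp: simplex_D_def)
  moreover have "closed {x::real^'n. \<forall>k. 0 \<le> x $ k}"
    by (intro closed_Collect_all closed_Collect_le continuous_on_const continuous_on_component
        continuous_on_id)
  moreover have "closed {x::real^'n. (\<Sum>k\<in>UNIV. x $ k) \<le> 1}"
    by (intro closed_Collect_le continuous_on_const continuous_on_sum continuous_on_component
        continuous_on_id)
  ultimately have "closed (simplex_D :: (real^'n) set)" by (metis closed_Int)
  moreover have "bounded (simplex_D :: (real^'n) set)"
    unfolding bounded_iff using simplex_D_norm_le_1 by blast
  ultimately show ?thesis by (simp add: compact_eq_bounded_closed)
qed

lemma abs_sum_components_le: "\<bar>\<Sum>k\<in>UNIV. (z::real^'n) $ k\<bar> \<le> real CARD('n) * norm z"
proof -
  have "\<bar>\<Sum>k\<in>UNIV. z $ k\<bar> \<le> (\<Sum>k\<in>UNIV. \<bar>z $ k\<bar>)" by (rule sum_abs)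
  also have "\<dots> \<le> (\<Sum>k\<in>(UNIV::'n set). norm z)" by (intro sum_mono component_le_norm_cart)
  finally show ?thesis by simp
qed

lemma sum_components_add_axis:
  "(\<Sum>k\<in>UNIV. (y + c *\<^sub>R axis j (1::real)) $ k) = (\<Sum>k\<in>UNIV. y $ k) + c"
  by (simp add: axis_def sum.distrib if_distrib[of "\<lambda>z. c * z"] cong: if_cong)

lemma jump_between_in_simplex_D:
  assumes x: "x \<in> simplex_D" and g: "0 \<le> \<gamma>" "\<gamma> \<le> 1" and ij: "i \<noteq> j"
  shows "x + (\<gamma> * x $ i) *\<^sub>R (axis j 1 - axis i 1) \<in> simplex_D"
proof -
  have "\<gamma> * x $ i \<le> x $ i" "0 \<le> \<gamma> * x $ i"
    using g simplex_D_component_bounds[OF x, of i] by (simp_all add: mult_left_le_one_le)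
  then have "\<forall>k. 0 \<le> (x + (\<gamma> * x $ i) *\<^sub>R (axis j 1 - axis i 1)) $ k"
    using simplex_D_component_bounds(1)[OF x] ij by (auto simp: axis_def)
  moreover have "(\<Sum>k\<in>UNIV. (x + (\<gamma> * x $ i) *\<^sub>R (axis j 1 - axis i 1)) $ k) = (\<Sum>k\<in>UNIV. x $ k)"
    using sum_components_add_axis[of "x + (\<gamma> * x $ i) *\<^sub>R axis j 1" "- (\<gamma> * x $ i)" i]
      sum_components_add_axis[of x "\<gamma> * x $ i" j]
    by (simp add: algebra_simps)
  ultimately show ?thesis using x by (simp add: simplex_D_def)
qed

lemma jump_to_zero_in_simplex_D:
  assumes x: "x \<in> simplex_D" and g: "0 \<le> \<gamma>" "\<gamma> \<le> 1"
  shows "x - (\<gamma> * x $ i) *\<^sub>R axis i 1 \<in> simplex_D"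
proof -
  have le: "\<gamma> * x $ i \<le> x $ i" and nonneg: "0 \<le> \<gamma> * x $ i"
    using g simplex_D_component_bounds[OF x, of i] by (simp_all add: mult_left_le_one_le)
  then have "\<forall>k. 0 \<le> (x - (\<gamma> * x $ i) *\<^sub>R axis i 1) $ k"
    using simplex_D_component_bounds(1)[OF x] by (auto simp: axis_def)
  moreover have "(\<Sum>k\<in>UNIV. (x - (\<gamma> * x $ i) *\<^sub>R axis i 1) $ k) = (\<Sum>k\<in>UNIV. x $ k) - \<gamma> * x $ i"
    using sum_components_add_axis[of x "- (\<gamma> * x $ i)" i] by (simp add: algebra_simps)
  ultimately show ?thesis using x nonneg by (simp add: simplex_D_def)
qed

lemma jump_from_zero_in_simplex_D:
  assumes x: "x \<in> simplex_D" and g: "0 \<le> \<gamma>" "\<gamma> \<le> 1"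
  shows "x + (\<gamma> * x0 x) *\<^sub>R axis j 1 \<in> simplex_D"
proof -
  have le: "\<gamma> * x0 x \<le> x0 x" and nonneg: "0 \<le> \<gamma> * x0 x"
    using g x0_bounds[OF x] by (simp_all add: mult_left_le_one_le)
  then have "\<forall>k. 0 \<le> (x + (\<gamma> * x0 x) *\<^sub>R axis j 1) $ k"
    using simplex_D_component_bounds(1)[OF x] by (auto simp: axis_def)
  moreover have "(\<Sum>k\<in>UNIV. (x + (\<gamma> * x0 x) *\<^sub>R axis j 1) $ k) = (\<Sum>k\<in>UNIV. x $ k) + \<gamma> * x0 x"
    by (rule sum_components_add_axis)
  ultimately show ?thesis using le by (simp add: simplex_D_def x0_def)
qed

lemma Jop_add_scaled:
  "Jop f0 f lam lamO lamI gam gamO gamI (\<lambda>y. g y + c * h y) x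
   = Jop f0 f lam lamO lamI gam gamO gamI g x + c * Jop f0 f lam lamO lamI gam gamO gamI h x"
proof -
  have eq: "\<And>L a b a' b'. L * ((a + c * b) - (a' + c * b')) = L * (a - a') + c * (L * (b - b'))"
    by algebra
  show ?thesis unfolding Jop_def
    by (simp only: eq sum.distrib sum_distrib_left[symmetric]) (simp add: algebra_simps)
qed

lemma Jop_uminus:
  "Jop f0 f lam lamO lamI gam gamO gamI (\<lambda>y. - g y) x = - Jop f0 f lam lamO lamI gam gamO gamI g x"
  using Jop_add_scaled[of f0 f lam lamO lamI gam gamO gamI "\<lambda>y. 0" "-1" g x] by (simp add: Jop_def)

definition jump_targets :: "('n \<Rightarrow> 'n \<Rightarrow> real) \<Rightarrow> ('n \<Rightarrow> real) \<Rightarrow> ('n \<Rightarrow> real) \<Rightarrow> real^'n \<Rightarrow> (real^'n) set" where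
  "jump_targets gam gamO gamI x =
     (\<lambda>(i, j). x + (gam i j * x $ i) *\<^sub>R (axis j 1 - axis i 1)) ` UNIV
     \<union> range (\<lambda>i. x - (gamO i * x $ i) *\<^sub>R axis i 1) \<union> range (\<lambda>j. x + (gamI j * x0 x) *\<^sub>R axis j 1)"

lemma finite_jump_targets: "finite (jump_targets gam gamO gamI x)"
  by (simp add: jump_targets_def)

lemma visc_super_imp_visc_sub_uminus:
  assumes "visc_super f0 f lam lamO lamI gam gamO gamI v"
  shows "visc_sub f0 f lam lamO lamI gam gamO gamI (\<lambda>p. - v p)"
  unfolding visc_sub_def
proof (intro conjI allI impI; (elim conjE)?)
  show "bounded ((\<lambda>p. - v p) ` dom_st)"
    using assms unfolding visc_super_def bounded_iff by (auto simp: image_iff)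
  show "usc_on dom_st (\<lambda>p. - v p)"
    using assms by (simp add: visc_super_def lsc_on_uminus)
next
  fix \<phi> x t
  assume sm: "smooth \<phi>" and x: "x \<in> simplex_D" and t: "0 < t" and eq: "- v (x, t) = \<phi> (x, t)"
    and max: "\<forall>p\<in>dom_st. - v p - \<phi> p \<le> - v (x, t) - \<phi> (x, t)"
  have sm': "smooth (\<lambda>p. - \<phi> p)"
    using sm Ck_cmult[of _ \<phi> "-1"] by (simp add: smooth_def)
  have "frechet_derivative (\<lambda>p. - \<phi> p) (at (x, t)) = (\<lambda>h. - frechet_derivative \<phi> (at (x, t)) h)"
    by (rule frechet_derivative_at[symmetric], rule has_derivative_minus)
       (use smooth_differentiable[OF sm] frechet_derivative_works in blast)
  moreover have "frechet_derivative (\<lambda>p. - \<phi> p) (at (x, t)) (0, 1)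
      + frechet_derivative (\<lambda>p. - \<phi> p) (at (x, t)) (drift f0 f x, 0)
      \<ge> Jop f0 f lam lamO lamI gam gamO gamI (\<lambda>y. - \<phi> (y, t)) x"
    using assms[unfolded visc_super_def, THEN conjunct2, THEN conjunct2, rule_format,
                of "\<lambda>p. - \<phi> p" x t] sm' x t eq max
    by force
  ultimately show "frechet_derivative \<phi> (at (x, t)) (0, 1) + frechet_derivative \<phi> (at (x, t)) (drift f0 f x, 0)
      \<le> Jop f0 f lam lamO lamI gam gamO gamI (\<lambda>y. \<phi> (y, t)) x"
    by (simp add: Jop_uminus)
qed

locale jump_process =
  fixes f0 :: "real^'n \<Rightarrow> real" and f :: "'n \<Rightarrow> real^'n \<Rightarrow> real"
    and lam gam :: "'n \<Rightarrow> 'n \<Rightarrow> real" and lamO lamI gamO gamI :: "'n \<Rightarrow> real"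
  assumes f0_nonneg: "\<And>x. x \<in> simplex_D \<Longrightarrow> f0 x \<ge> 0"
    and f_nonneg: "\<And>k x. x \<in> simplex_D \<Longrightarrow> f k x \<ge> 0"
    and lam_pos: "\<And>i j. i \<noteq> j \<Longrightarrow> lam i j > 0"
    and lamO_pos: "\<And>i. lamO i > 0"
    and lamI_pos: "\<And>j. lamI j > 0"
    and gam_range: "\<And>i j. i \<noteq> j \<Longrightarrow> 0 < gam i j \<and> gam i j \<le> 1"
    and gamO_range: "\<And>i. 0 < gamO i \<and> gamO i \<le> 1"
    and gamI_range: "\<And>j. 0 < gamI j \<and> gamI j \<le> 1"
begin

abbreviation J :: "(real^'n \<Rightarrow> real) \<Rightarrow> real^'n \<Rightarrow> real" where
  "J \<equiv> Jop f0 f lam lamO lamI gam gamO gamI"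

lemma jump_targets_subset_simplex_D:
  "x \<in> simplex_D \<Longrightarrow> jump_targets gam gamO gamI x \<subseteq> simplex_D"
  unfolding jump_targets_def
  apply (auto intro!: jump_to_zero_in_simplex_D jump_from_zero_in_simplex_D
              simp: gamO_range gamI_range less_imp_le)
  subgoal for i j
    by (cases "i = j") (auto intro!: jump_between_in_simplex_D simp: gam_range less_imp_le)
  done

lemma Jop_mono:
  assumes x: "x \<in> simplex_D"
    and le: "\<And>y. y \<in> jump_targets gam gamO gamI x \<Longrightarrow> \<psi>1 y - \<psi>1 x \<le> \<psi>2 y - \<psi>2 x"
  shows "J \<psi>1 x \<le> J \<psi>2 x"
proof -
  have "0 \<le> lam i j * f i x" if "i \<noteq> j" for i j using lam_pos[OF that] f_nonneg[OF x] by simp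
  moreover have "0 \<le> lamO i * f i x" for i using lamO_pos[of i] f_nonneg[OF x] by simp
  moreover have "0 \<le> lamI j * f0 x" for j using lamI_pos[of j] f0_nonneg[OF x] by simp
  moreover have "x + (gam i j * x $ i) *\<^sub>R (axis j 1 - axis i 1) \<in> jump_targets gam gamO gamI x"
    for i j unfolding jump_targets_def by (rule UnI1, rule UnI1, rule image_eqI[of _ _ "(i, j)"]) auto
  moreover have "x - (gamO i * x $ i) *\<^sub>R axis i 1 \<in> jump_targets gam gamO gamI x"
    and "x + (gamI j * x0 x) *\<^sub>R axis j 1 \<in> jump_targets gam gamO gamI x" for i j
    unfolding jump_targets_def by blast+
  ultimately show ?thesis unfolding Jop_def
    by (intro add_mono sum_mono mult_left_mono le) auto
qed

text \<open>The test function is replaced by one that comes arbitrarily close to \<open>w\<close> at the finitely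
  many jump targets, which the jump operator is monotone in.\<close>

lemma visc_sub_ineq_jump_of_solution:
  assumes sub: "visc_sub f0 f lam lamO lamI gam gamO gamI w"
    and sm: "smooth \<phi>0" and x: "x \<in> simplex_D" and t: "t > 0" and eq: "w (x, t) = \<phi>0 (x, t)"
    and le: "\<forall>p\<in>dom_st. w p \<le> \<phi>0 p"
  shows "frechet_derivative \<phi>0 (at (x, t)) (0, 1) + frechet_derivative \<phi>0 (at (x, t)) (drift f0 f x, 0)
     \<le> J (\<lambda>y. w (y, t)) x"
proof (rule field_le_epsilon)
  fix e :: real assume e: "e > 0"
  define mark where "mark y = (if y = x then 0 else (1::real))" for y
  define \<delta> where "\<delta> = e / (\<bar>J mark x\<bar> + 1)"
  have \<delta>: "\<delta> > 0" using e by (simp add: \<delta>_def add_pos_nonneg)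
  define S where "S = (\<lambda>y. (y, t)) ` jump_targets gam gamO gamI x - {(x, t)}"
  have "finite S" by (simp add: S_def finite_jump_targets)
  moreover have "S \<subseteq> dom_st"
    using jump_targets_subset_simplex_D[OF x] t by (auto simp: S_def dom_st_def)
  moreover have "usc_on dom_st w" using sub by (simp add: visc_sub_def)
  ultimately obtain \<phi> where \<phi>: "smooth \<phi>" "\<phi> (x, t) = \<phi>0 (x, t)"
      "frechet_derivative \<phi> (at (x, t)) = frechet_derivative \<phi>0 (at (x, t))"
      "\<forall>p\<in>dom_st. w p \<le> \<phi> p" "\<forall>q\<in>S. \<phi> q \<le> w q + \<delta>"
    using smooth_majorant_close_on_finite[OF _ sm le _ _ _ \<delta>, of S "(x, t)"] by (auto simp: S_def)
  have "frechet_derivative \<phi>0 (at (x, t)) (0, 1) + frechet_derivative \<phi>0 (at (x, t)) (drift f0 f x, 0)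
      = frechet_derivative \<phi> (at (x, t)) (0, 1) + frechet_derivative \<phi> (at (x, t)) (drift f0 f x, 0)"
    using \<phi>(3) by simp
  also have "\<dots> \<le> J (\<lambda>y. \<phi> (y, t)) x"
    using sub[unfolded visc_sub_def, THEN conjunct2, THEN conjunct2, rule_format, of \<phi> x t]
      \<phi>(1,2,4) x t eq
    by force
  also have "\<dots> \<le> J (\<lambda>y. w (y, t) + \<delta> * mark y) x"
  proof (rule Jop_mono[OF x])
    fix y assume "y \<in> jump_targets gam gamO gamI x"
    then show "\<phi> (y, t) - \<phi> (x, t) \<le> (w (y, t) + \<delta> * mark y) - (w (x, t) + \<delta> * mark x)"
      using \<phi>(2,5) eq by (cases "y = x") (auto simp: S_def mark_def)
  qed
  also have "\<dots> = J (\<lambda>y. w (y, t)) x + \<delta> * J mark x" by (rule Jop_add_scaled)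
  also have "\<dots> \<le> J (\<lambda>y. w (y, t)) x + e"
  proof -
    have "\<delta> * J mark x \<le> \<delta> * (\<bar>J mark x\<bar> + 1)" using \<delta> by (intro mult_left_mono) auto
    also have "\<dots> = e" unfolding \<delta>_def by (simp add: add_nonneg_eq_0_iff)
    finally show ?thesis by simp
  qed
  finally show "frechet_derivative \<phi>0 (at (x, t)) (0, 1) + frechet_derivative \<phi>0 (at (x, t)) (drift f0 f x, 0)
     \<le> J (\<lambda>y. w (y, t)) x + e" .
qed

end

definition lipschitz_bounded_on :: "'a::real_normed_vector set \<Rightarrow> ('a \<Rightarrow> real) \<Rightarrow> bool" where
  "lipschitz_bounded_on S g \<longleftrightarrow>
     (\<exists>L. \<forall>x\<in>S. \<forall>y\<in>S. \<bar>g x - g y\<bar> \<le> L * norm (x - y)) \<and> (\<exists>B. \<forall>x\<in>S. \<bar>g x\<bar> \<le> B)"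

lemma lipschitz_bounded_on_const: "lipschitz_bounded_on S (\<lambda>x. c)"
  unfolding lipschitz_bounded_on_def by (auto intro!: exI[of _ 0] exI[of _ "\<bar>c\<bar>"])

lemma lipschitz_bounded_on_add:
  assumes "lipschitz_bounded_on S g" "lipschitz_bounded_on S h"
  shows "lipschitz_bounded_on S (\<lambda>x. g x + h x)"
proof -
  obtain L1 B1 L2 B2
    where g: "\<forall>x\<in>S. \<forall>y\<in>S. \<bar>g x - g y\<bar> \<le> L1 * norm (x - y)" "\<forall>x\<in>S. \<bar>g x\<bar> \<le> B1"
      and h: "\<forall>x\<in>S. \<forall>y\<in>S. \<bar>h x - h y\<bar> \<le> L2 * norm (x - y)" "\<forall>x\<in>S. \<bar>h x\<bar> \<le> B2"
    using assms unfolding lipschitz_bounded_on_def by blast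
  have "\<bar>g x + h x - (g y + h y)\<bar> \<le> (L1 + L2) * norm (x - y)" if "x \<in> S" "y \<in> S" for x y
    using g(1) h(1) that by (force simp: algebra_simps)
  moreover have "\<bar>g x + h x\<bar> \<le> B1 + B2" if "x \<in> S" for x
    using g(2) h(2) that by (force intro: order_trans[OF abs_triangle_ineq] add_mono)
  ultimately show ?thesis unfolding lipschitz_bounded_on_def by blast
qed

lemma lipschitz_bounded_on_mult:
  assumes "lipschitz_bounded_on S g" "lipschitz_bounded_on S h"
  shows "lipschitz_bounded_on S (\<lambda>x. g x * h x)"
proof -
  obtain L1 B1 L2 B2
    where g: "\<forall>x\<in>S. \<forall>y\<in>S. \<bar>g x - g y\<bar> \<le> L1 * norm (x - y)" "\<forall>x\<in>S. \<bar>g x\<bar> \<le> B1"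
      and h: "\<forall>x\<in>S. \<forall>y\<in>S. \<bar>h x - h y\<bar> \<le> L2 * norm (x - y)" "\<forall>x\<in>S. \<bar>h x\<bar> \<le> B2"
    using assms unfolding lipschitz_bounded_on_def by blast
  have "\<bar>g x * h x - g y * h y\<bar> \<le> (B1 * L2 + B2 * L1) * norm (x - y)" if x: "x \<in> S" and y: "y \<in> S" for x y
  proof -
    have "g x * h x - g y * h y = g x * (h x - h y) + h y * (g x - g y)" by (simp add: algebra_simps)
    then have "\<bar>g x * h x - g y * h y\<bar> \<le> \<bar>g x\<bar> * \<bar>h x - h y\<bar> + \<bar>h y\<bar> * \<bar>g x - g y\<bar>"
      by (metis abs_mult abs_triangle_ineq)
    also have "\<dots> \<le> B1 * (L2 * norm (x - y)) + B2 * (L1 * norm (x - y))"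
      using g h x y by (intro add_mono mult_mono) auto
    finally show ?thesis by (simp add: algebra_simps)
  qed
  moreover have "\<bar>g x * h x\<bar> \<le> B1 * B2" if "x \<in> S" for x
    using g(2) h(2) that by (auto simp: abs_mult intro!: mult_mono)
  ultimately show ?thesis unfolding lipschitz_bounded_on_def by blast
qed

lemma lipschitz_bounded_on_diff:
  assumes "lipschitz_bounded_on S g" "lipschitz_bounded_on S h"
  shows "lipschitz_bounded_on S (\<lambda>x. g x - h x)"
  using lipschitz_bounded_on_add[OF assms(1) lipschitz_bounded_on_mult[OF lipschitz_bounded_on_const assms(2)],
      of "-1"]
  by simp

lemma lipschitz_bounded_on_sum:
  "finite I \<Longrightarrow> (\<And>i. i \<in> I \<Longrightarrow> lipschitz_bounded_on S (g i)) \<Longrightarrow> lipschitz_bounded_on S (\<lambda>x. \<Sum>i\<in>I. g i x)"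
proof (induction I rule: finite_induct)
  case (insert a F)
  then show ?case using lipschitz_bounded_on_add[of S "g a" "\<lambda>x. \<Sum>i\<in>F. g i x"] by simp
qed (simp add: lipschitz_bounded_on_const)

lemma lipschitz_bounded_on_lipschitz_on:
  assumes "bounded S" "C-lipschitz_on S g"
  shows "lipschitz_bounded_on S g"
proof (cases "S = {}")
  case False
  then obtain a where a: "a \<in> S" by blast
  obtain M where M: "\<forall>x\<in>S. norm x \<le> M" using assms(1) unfolding bounded_iff by blast
  have C: "0 \<le> C" and lip: "\<forall>x\<in>S. \<forall>y\<in>S. \<bar>g x - g y\<bar> \<le> C * norm (x - y)"
    using assms(2) by (auto simp: lipschitz_on_def dist_norm)
  have "\<bar>g x\<bar> \<le> \<bar>g a\<bar> + C * (M + M)" if x: "x \<in> S" for x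
  proof -
    have "norm x \<le> M" "norm a \<le> M" using M x a by auto
    then have "norm (x - a) \<le> M + M" using norm_triangle_ineq4[of x a] by linarith
    then have "C * norm (x - a) \<le> C * (M + M)" using C by (rule mult_left_mono)
    then show ?thesis using lip x a by force
  qed
  with lip show ?thesis unfolding lipschitz_bounded_on_def by blast
qed (simp add: lipschitz_bounded_on_def)

lemma lipschitz_bounded_on_uniform:
  fixes g :: "'i::finite \<Rightarrow> 'a::real_normed_vector \<Rightarrow> real"
  assumes "\<And>i. lipschitz_bounded_on S (g i)"
  obtains L B where "L \<ge> 0" "B \<ge> 0"
    "\<And>i x y. x \<in> S \<Longrightarrow> y \<in> S \<Longrightarrow> \<bar>g i x - g i y\<bar> \<le> L * norm (x - y)"
    "\<And>i x. x \<in> S \<Longrightarrow> \<bar>g i x\<bar> \<le> B"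
proof -
  obtain L B where L: "\<And>i. \<forall>x\<in>S. \<forall>y\<in>S. \<bar>g i x - g i y\<bar> \<le> L i * norm (x - y)"
    and B: "\<And>i. \<forall>x\<in>S. \<bar>g i x\<bar> \<le> B i"
    using assms unfolding lipschitz_bounded_on_def by metis
  have Lsum: "\<bar>g i x - g i y\<bar> \<le> (\<Sum>i\<in>UNIV. \<bar>L i\<bar>) * norm (x - y)" if "x \<in> S" "y \<in> S" for i x y
  proof -
    have "L i \<le> (\<Sum>i\<in>UNIV. \<bar>L i\<bar>)"
      using member_le_sum[of i UNIV "\<lambda>i. \<bar>L i\<bar>"] by force
    then show ?thesis using L[of i] that by (meson mult_right_mono norm_ge_zero order_trans)
  qed
  have Bsum: "\<bar>g i x\<bar> \<le> (\<Sum>i\<in>UNIV. \<bar>B i\<bar>)" if "x \<in> S" for i x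
    using B[of i] that member_le_sum[of i UNIV "\<lambda>i. \<bar>B i\<bar>"] by force
  show ?thesis by (rule that[OF _ _ Lsum Bsum]) (auto intro: sum_nonneg)
qed

lemma lipschitz_bounded_on_component:
  "bounded S \<Longrightarrow> lipschitz_bounded_on S (\<lambda>x::real^'n. x $ k)"
  unfolding lipschitz_bounded_on_def bounded_iff
  by (metis (no_types, opaque_lifting) component_le_norm_cart mult_1 order_trans vector_minus_component)

lemma lipschitz_bounded_on_x0: "lipschitz_bounded_on simplex_D (x0 :: real^'n \<Rightarrow> real)"
  unfolding lipschitz_bounded_on_def
proof (intro conjI exI ballI)
  fix x y :: "real^'n"
  have "x0 x - x0 y = - (\<Sum>k\<in>UNIV. (x - y) $ k)" by (simp add: x0_def sum_subtractf)
  then show "\<bar>x0 x - x0 y\<bar> \<le> real CARD('n) * norm (x - y)"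
    using abs_sum_components_le[of "x - y"] by simp
next
  fix x :: "real^'n" assume "x \<in> simplex_D"
  then show "\<bar>x0 x\<bar> \<le> 1" using x0_bounds by fastforce
qed

lemma bounded_simplex_D: "bounded simplex_D"
  using compact_simplex_D compact_imp_bounded by blast

lemma drift_inner_bound:
  assumes "lipschitz_bounded_on simplex_D f0" "\<And>k. lipschitz_bounded_on simplex_D (f k)"
  obtains Ld where "Ld \<ge> 0" "\<And>x y. x \<in> simplex_D \<Longrightarrow> y \<in> simplex_D \<Longrightarrow>
    \<bar>inner (x - y) (drift f0 f x - drift f0 f y)\<bar> \<le> Ld * inner (x - y) (x - (y::real^'n))"
proof -
  have "lipschitz_bounded_on simplex_D (\<lambda>x. drift f0 f x $ k)" for k
    unfolding drift_def fbar_def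
    by (auto intro!: lipschitz_bounded_on_mult lipschitz_bounded_on_diff lipschitz_bounded_on_add
        lipschitz_bounded_on_sum lipschitz_bounded_on_component lipschitz_bounded_on_x0
        lipschitz_bounded_on_const assms bounded_simplex_D)
  then obtain L B where L: "L \<ge> 0" "B \<ge> 0" and LB: "\<And>k x y. x \<in> simplex_D \<Longrightarrow> y \<in> simplex_D \<Longrightarrow>
      \<bar>drift f0 f x $ k - drift f0 f y $ k\<bar> \<le> L * norm (x - y)"
    and "\<And>k x. x \<in> simplex_D \<Longrightarrow> \<bar>drift f0 f x $ k\<bar> \<le> B"
    by (rule lipschitz_bounded_on_uniform[of simplex_D "\<lambda>k x. drift f0 f x $ k"]) blast
  show ?thesis
  proof (rule that[of "real CARD('n) * L"])
    fix x y :: "real^'n" assume x: "x \<in> simplex_D" and y: "y \<in> simplex_D"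
    have "\<bar>inner (x - y) (drift f0 f x - drift f0 f y)\<bar>
        \<le> (\<Sum>k\<in>UNIV. \<bar>(x - y) $ k\<bar> * \<bar>drift f0 f x $ k - drift f0 f y $ k\<bar>)"
      unfolding inner_vec_def abs_mult[symmetric] by (simp add: sum_abs)
    also have "\<dots> \<le> (\<Sum>k\<in>(UNIV::'n set). norm (x - y) * (L * norm (x - y)))"
      using LB x y by (intro sum_mono mult_mono component_le_norm_cart) auto
    also have "\<dots> = real CARD('n) * L * inner (x - y) (x - y)"
      by (simp add: power2_norm_eq_inner[symmetric] power2_eq_square algebra_simps)
    finally show "\<bar>inner (x - y) (drift f0 f x - drift f0 f y)\<bar> \<le> real CARD('n) * L * inner (x - y) (x - y)" .
  qed (use L in simp)
qed

definition doubling :: "('a::real_inner \<times> real \<Rightarrow> real) \<Rightarrow> ('a \<times> real \<Rightarrow> real) \<Rightarrow> real \<Rightarrow> real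
    \<Rightarrow> 'a \<times> real \<Rightarrow> 'a \<times> real \<Rightarrow> real" where
  "doubling u v \<epsilon> \<eta> p q = u p - v q - inner (p - q) (p - q) / (2 * \<epsilon>) - \<eta> * (snd p + snd q)"

definition doubling_max :: "((real^'n) \<times> real \<Rightarrow> real) \<Rightarrow> ((real^'n) \<times> real \<Rightarrow> real) \<Rightarrow> real \<Rightarrow> real
    \<Rightarrow> (real^'n) \<times> real \<Rightarrow> (real^'n) \<times> real \<Rightarrow> bool" where
  "doubling_max u v \<epsilon> \<eta> p q \<longleftrightarrow> p \<in> dom_st \<and> q \<in> dom_st \<and>
     (\<forall>a\<in>dom_st. \<forall>b\<in>dom_st. doubling u v \<epsilon> \<eta> a b \<le> doubling u v \<epsilon> \<eta> p q)"

lemma smooth_quadratic_test: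
  fixes z :: "'a::real_inner \<times> real"
  shows "smooth (\<lambda>p. c + k * inner (p - z) (p - z) + \<eta> * snd p)"
proof -
  have "Ck m (\<lambda>p. snd p + 0)" for m by (rule Ck_affine[OF bounded_linear_snd])
  then show ?thesis unfolding smooth_def
    by (intro allI Ck_add Ck_const Ck_cmult Ck_inner_self_diff) simp
qed

lemma frechet_derivative_quadratic_test:
  fixes z :: "'a::real_inner \<times> real"
  shows "frechet_derivative (\<lambda>p. c + k * inner (p - z) (p - z) + \<eta> * snd p) (at p0)
           = (\<lambda>h. k * (2 * inner (p0 - z) h) + \<eta> * snd h)"
proof -
  have "((\<lambda>p. c + k * inner (p - z) (p - z) + \<eta> * snd p) has_derivative
        (\<lambda>h. 0 + k * (2 * inner (p0 - z) h) + \<eta> * snd h)) (at p0)"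
    by (intro has_derivative_add has_derivative_const has_derivative_mult_right
        has_derivative_inner_self_diff has_derivative_snd[OF has_derivative_ident])
  then show ?thesis by (simp add: frechet_derivative_at[symmetric])
qed

lemma norm_shift_diff_le:
  fixes x y d :: "'a::real_normed_vector"
  assumes "\<bar>a - b\<bar> \<le> K * norm (x - y)" "norm d \<le> 2"
  shows "norm ((x + a *\<^sub>R d) - (y + b *\<^sub>R d)) \<le> (1 + 2 * K) * norm (x - y)"
proof -
  have "norm ((x + a *\<^sub>R d) - (y + b *\<^sub>R d)) = norm ((x - y) + (a - b) *\<^sub>R d)"
    by (simp add: algebra_simps)
  also have "\<dots> \<le> norm (x - y) + \<bar>a - b\<bar> * norm d"
    using norm_triangle_ineq[of "x - y" "(a - b) *\<^sub>R d"] by simp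
  also have "\<dots> \<le> norm (x - y) + K * norm (x - y) * 2"
    using assms by (intro add_left_mono mult_mono) auto
  finally show ?thesis by (simp add: algebra_simps)
qed

lemma jump_targets_lipschitz:
  fixes x y :: "real^'n"
  assumes "\<bar>\<gamma>\<bar> \<le> 1"
  shows "norm ((x + (\<gamma> * x $ i) *\<^sub>R (axis j 1 - axis i 1)) - (y + (\<gamma> * y $ i) *\<^sub>R (axis j 1 - axis i 1)))
           \<le> (1 + 2 * real CARD('n)) * norm (x - y)"
    and "norm ((x - (\<gamma> * x $ i) *\<^sub>R axis i 1) - (y - (\<gamma> * y $ i) *\<^sub>R axis i 1))
           \<le> (1 + 2 * real CARD('n)) * norm (x - y)"
    and "norm ((x + (\<gamma> * x0 x) *\<^sub>R axis j 1) - (y + (\<gamma> * x0 y) *\<^sub>R axis j 1))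
           \<le> (1 + 2 * real CARD('n)) * norm (x - y)"
proof -
  have card: "1 \<le> real CARD('n)" by simp
  have "\<bar>\<gamma> * x $ i - \<gamma> * y $ i\<bar> \<le> norm (x - y)"
    using assms component_le_norm_cart[of "x - y" i]
    by (simp add: abs_mult right_diff_distrib[symmetric]) (meson abs_ge_zero mult_left_le_one_le order_trans)
  also have "\<dots> \<le> real CARD('n) * norm (x - y)" using card by (simp add: mult_le_cancel_right1)
  finally have comp: "\<bar>\<gamma> * x $ i - \<gamma> * y $ i\<bar> \<le> real CARD('n) * norm (x - y)" .
  have "norm (axis j (1::real) - axis i 1) \<le> 2"
    using norm_triangle_ineq4[of "axis j (1::real)" "axis i 1"] by simp
  then show "norm ((x + (\<gamma> * x $ i) *\<^sub>R (axis j 1 - axis i 1)) - (y + (\<gamma> * y $ i) *\<^sub>R (axis j 1 - axis i 1)))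
           \<le> (1 + 2 * real CARD('n)) * norm (x - y)"
    using norm_shift_diff_le[OF comp] by simp
  show "norm ((x - (\<gamma> * x $ i) *\<^sub>R axis i 1) - (y - (\<gamma> * y $ i) *\<^sub>R axis i 1))
           \<le> (1 + 2 * real CARD('n)) * norm (x - y)"
    using norm_shift_diff_le[of "- (\<gamma> * x $ i)" "- (\<gamma> * y $ i)" "real CARD('n)" x y "axis i 1"] comp
    by simp
  have "\<bar>x0 x - x0 y\<bar> \<le> real CARD('n) * norm (x - y)"
    using abs_sum_components_le[of "x - y"] by (simp add: x0_def sum_subtractf)
  then have "\<bar>\<gamma> * x0 x - \<gamma> * x0 y\<bar> \<le> real CARD('n) * norm (x - y)"
    using assms by (simp add: abs_mult right_diff_distrib[symmetric])
                   (meson abs_ge_zero mult_left_le_one_le order_trans)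
  then show "norm ((x + (\<gamma> * x0 x) *\<^sub>R axis j 1) - (y + (\<gamma> * x0 y) *\<^sub>R axis j 1))
           \<le> (1 + 2 * real CARD('n)) * norm (x - y)"
    by (rule norm_shift_diff_le) simp
qed

lemma doubling_max_le_at_shifted:
  assumes "doubling_max u v \<epsilon> \<eta> (x, t) (y, s)" "x' \<in> simplex_D" "y' \<in> simplex_D"
  shows "u (x', t) - v (y', s) - inner (x' - y') (x' - y') / (2 * \<epsilon>)
           \<le> u (x, t) - v (y, s) - inner (x - y) (x - y) / (2 * \<epsilon>)"
proof -
  have "t \<ge> 0" "s \<ge> 0" using assms(1) by (auto simp: doubling_max_def dom_st_def)
  then have "doubling u v \<epsilon> \<eta> (x', t) (y', s) \<le> doubling u v \<epsilon> \<eta> (x, t) (y, s)"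
    using assms by (auto simp: doubling_max_def dom_st_def)
  then show ?thesis unfolding doubling_def by (simp add: add_divide_distrib)
qed

text \<open>One jump term of \<open>J u - J v\<close>: \<open>U0, U1\<close> and \<open>V0, V1\<close> are the values of \<open>u\<close> and \<open>v\<close>
  before and after the jump from \<open>x\<close> and from \<open>y\<close>, and \<open>g1, g2\<close> the corresponding rates.\<close>

lemma jump_term_difference_le:
  fixes c g1 g2 U0 U1 V0 V1 Lf Bf B K Nz N' nz \<epsilon> :: real
  assumes c: "c \<ge> 0" and \<epsilon>: "\<epsilon> > 0"
    and g: "\<bar>g1 - g2\<bar> \<le> Lf * nz" "\<bar>g1\<bar> \<le> Bf" "g1 \<ge> 0"
    and V: "\<bar>V1 - V0\<bar> \<le> 2 * B" and max: "U1 - V1 - N' / (2 * \<epsilon>) \<le> U0 - V0 - Nz / (2 * \<epsilon>)"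
    and NK: "N' \<le> K * Nz" and K: "K \<ge> 0" and Nz: "Nz \<ge> 0"
  shows "c * g1 * (U1 - U0) - c * g2 * (V1 - V0) \<le> c * (Bf * K * Nz / (2 * \<epsilon>) + Lf * 2 * B * nz)"
proof -
  have "(U1 - U0) - (V1 - V0) \<le> (N' - Nz) / (2 * \<epsilon>)" using max by (simp add: diff_divide_distrib)
  also have "\<dots> \<le> K * Nz / (2 * \<epsilon>)" using NK Nz \<epsilon> by (intro divide_right_mono) auto
  finally have "g1 * ((U1 - U0) - (V1 - V0)) \<le> g1 * (K * Nz / (2 * \<epsilon>))" using g(3) by (rule mult_left_mono)
  also have "\<dots> \<le> Bf * (K * Nz / (2 * \<epsilon>))" using g(2,3) K Nz \<epsilon> by (intro mult_right_mono) auto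
  finally have A: "g1 * ((U1 - U0) - (V1 - V0)) \<le> Bf * (K * Nz / (2 * \<epsilon>))" .
  have "(g1 - g2) * (V1 - V0) \<le> \<bar>g1 - g2\<bar> * \<bar>V1 - V0\<bar>" by (metis abs_ge_self abs_mult)
  also have "\<dots> \<le> (Lf * nz) * (2 * B)" using g(1) V by (intro mult_mono) auto
  finally have "g1 * (U1 - U0) - g2 * (V1 - V0) \<le> Bf * K * Nz / (2 * \<epsilon>) + Lf * 2 * B * nz"
    using A by (simp add: algebra_simps)
  then have "c * (g1 * (U1 - U0) - g2 * (V1 - V0)) \<le> c * (Bf * K * Nz / (2 * \<epsilon>) + Lf * 2 * B * nz)"
    using c by (rule mult_left_mono)
  then show ?thesis by (simp add: algebra_simps)
qed

lemma doubling_max_jump_term_le: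
  fixes u v :: "(real^'n) \<times> real \<Rightarrow> real"
  assumes \<epsilon>: "\<epsilon> > 0" and max: "doubling_max u v \<epsilon> \<eta> (x, t) (y, s)"
    and vB: "\<forall>p\<in>dom_st. \<bar>v p\<bar> \<le> B" and c: "c \<ge> 0"
    and g: "\<bar>g1 - g2\<bar> \<le> Lf * norm (x - y)" "\<bar>g1\<bar> \<le> Bf" "g1 \<ge> 0"
    and x': "x' \<in> simplex_D" and y': "y' \<in> simplex_D"
    and jump: "norm (x' - y') \<le> (1 + 2 * real CARD('n)) * norm (x - y)"
  shows "c * g1 * (u (x', t) - u (x, t)) - c * g2 * (v (y', s) - v (y, s))
    \<le> c * (Bf * (1 + 2 * real CARD('n))\<^sup>2 * inner (x - y) (x - y) / (2 * \<epsilon>) + Lf * 2 * B * norm (x - y))"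
proof -
  have "\<bar>v (y', s)\<bar> \<le> B" "\<bar>v (y, s)\<bar> \<le> B"
    using vB max y' by (auto simp: doubling_max_def dom_st_def)
  then have V: "\<bar>v (y', s) - v (y, s)\<bar> \<le> 2 * B" by linarith
  have sq: "inner (x' - y') (x' - y') \<le> (1 + 2 * real CARD('n))\<^sup>2 * inner (x - y) (x - y)"
    using jump unfolding power2_norm_eq_inner[symmetric] power_mult_distrib[symmetric]
    by (simp add: power_mono)
  show ?thesis
    by (rule jump_term_difference_le[OF c \<epsilon> g V doubling_max_le_at_shifted[OF max x' y'] sq]) simp_all
qed

context jump_process
begin

text \<open>At a maximum of the doubling functional, \<open>u\<close> is touched from above in \<open>(x, t)\<close> and \<open>v\<close>
  from below in \<open>(y, s)\<close> by quadratic test functions; their time derivatives cancel up to \<open>2 \<eta>\<close>.\<close>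

lemma doubling_max_visc_ineq:
  assumes sub: "visc_sub f0 f lam lamO lamI gam gamO gamI u"
    and super: "visc_super f0 f lam lamO lamI gam gamO gamI v"
    and \<epsilon>: "\<epsilon> > 0" and t: "t > 0" and s: "s > 0" and max: "doubling_max u v \<epsilon> \<eta> (x, t) (y, s)"
  shows "2 * \<eta> + inner (x - y) (drift f0 f x - drift f0 f y) / \<epsilon>
           \<le> J (\<lambda>x'. u (x', t)) x - J (\<lambda>y'. v (y', s)) y"
proof -
  have x: "x \<in> simplex_D" and y: "y \<in> simplex_D" and xt: "(x, t) \<in> dom_st" and ys: "(y, s) \<in> dom_st"
    and le: "\<And>a b. a \<in> dom_st \<Longrightarrow> b \<in> dom_st \<Longrightarrow> doubling u v \<epsilon> \<eta> a b \<le> doubling u v \<epsilon> \<eta> (x, t) (y, s)"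
    using max by (auto simp: doubling_max_def dom_st_def)
  define k where "k = 1 / (2 * \<epsilon>)"
  have k: "k * I = I / (2 * \<epsilon>)" for I by (simp add: k_def)
  define cu where "cu = u (x, t) - (k * inner ((x, t) - (y, s)) ((x, t) - (y, s)) + \<eta> * t)"
  define \<phi> where "\<phi> p = cu + k * inner (p - (y, s)) (p - (y, s)) + \<eta> * snd p" for p
  have "u p \<le> \<phi> p" if "p \<in> dom_st" for p
  proof -
    have "\<eta> * (snd p + s) = \<eta> * snd p + \<eta> * s" "\<eta> * (t + s) = \<eta> * t + \<eta> * s"
      by (simp_all add: distrib_left)
    with le[OF that ys] show ?thesis unfolding doubling_def \<phi>_def cu_def k by simp
  qed
  then have "frechet_derivative \<phi> (at (x, t)) (0, 1) + frechet_derivative \<phi> (at (x, t)) (drift f0 f x, 0)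
      \<le> J (\<lambda>y. u (y, t)) x"
    by (intro visc_sub_ineq_jump_of_solution[OF sub _ x t]) (auto simp: \<phi>_def[abs_def] cu_def smooth_quadratic_test)
  moreover have "frechet_derivative \<phi> (at (x, t)) (0, 1) + frechet_derivative \<phi> (at (x, t)) (drift f0 f x, 0)
      = (t - s) / \<epsilon> + \<eta> + inner (x - y) (drift f0 f x) / \<epsilon>"
    unfolding \<phi>_def[abs_def] frechet_derivative_quadratic_test k_def using \<epsilon> by (simp add: field_simps)
  moreover define cv where "cv = - v (y, s) - (k * inner ((y, s) - (x, t)) ((y, s) - (x, t)) + \<eta> * s)"
  moreover define \<psi> where "\<psi> p = cv + k * inner (p - (x, t)) (p - (x, t)) + \<eta> * snd p" for p
  moreover have "- v p \<le> \<psi> p" if "p \<in> dom_st" for p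
  proof -
    have "\<eta> * (t + snd p) = \<eta> * t + \<eta> * snd p" "\<eta> * (t + s) = \<eta> * t + \<eta> * s"
      by (simp_all add: distrib_left)
    moreover have sym: "inner (a - b) (a - b) = inner (b - a) (b - a)" for a b :: "(real^'n) \<times> real"
      by (metis inner_minus_left inner_minus_right minus_diff_eq minus_minus)
    ultimately show ?thesis using le[OF xt that] sym[of "(x, t)" p] sym[of "(x, t)" "(y, s)"]
      unfolding doubling_def \<psi>_def cv_def k by simp
  qed
  then have "frechet_derivative \<psi> (at (y, s)) (0, 1) + frechet_derivative \<psi> (at (y, s)) (drift f0 f y, 0)
      \<le> J (\<lambda>y'. - v (y', s)) y"
    by (intro visc_sub_ineq_jump_of_solution[OF visc_super_imp_visc_sub_uminus[OF super] _ y s])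
       (auto simp: \<psi>_def[abs_def] cv_def smooth_quadratic_test)
  moreover have "frechet_derivative \<psi> (at (y, s)) (0, 1) + frechet_derivative \<psi> (at (y, s)) (drift f0 f y, 0)
      = (s - t) / \<epsilon> + \<eta> - inner (x - y) (drift f0 f y) / \<epsilon>"
    unfolding \<psi>_def[abs_def] frechet_derivative_quadratic_test k_def using \<epsilon>
    by (simp add: field_simps inner_diff_left)
  ultimately show ?thesis
    by (simp add: Jop_uminus inner_diff_right diff_divide_distrib add_divide_distrib)
qed

lemma Jop_difference_le:
  fixes u v :: "(real^'n) \<times> real \<Rightarrow> real"
  assumes \<epsilon>: "\<epsilon> > 0" and max: "doubling_max u v \<epsilon> \<eta> (x, t) (y, s)"
    and vB: "\<forall>p\<in>dom_st. \<bar>v p\<bar> \<le> B"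
    and f0L: "\<bar>f0 x - f0 y\<bar> \<le> Lf * norm (x - y)" "\<bar>f0 x\<bar> \<le> Bf"
    and fL: "\<And>k. \<bar>f k x - f k y\<bar> \<le> Lf * norm (x - y)" "\<And>k. \<bar>f k x\<bar> \<le> Bf"
  shows "J (\<lambda>x'. u (x', t)) x - J (\<lambda>y'. v (y', s)) y
     \<le> ((\<Sum>i\<in>UNIV. \<Sum>j\<in>UNIV - {i}. lam i j) + (\<Sum>i\<in>UNIV. lamO i) + (\<Sum>j\<in>UNIV. lamI j))
        * (Bf * (1 + 2 * real CARD('n))\<^sup>2 * inner (x - y) (x - y) / (2 * \<epsilon>) + Lf * 2 * B * norm (x - y))"
proof -
  define E where "E = Bf * (1 + 2 * real CARD('n))\<^sup>2 * inner (x - y) (x - y) / (2 * \<epsilon>) + Lf * 2 * B * norm (x - y)"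
  have x: "x \<in> simplex_D" and y: "y \<in> simplex_D" using max by (auto simp: doubling_max_def dom_st_def)
  note term_le = doubling_max_jump_term_le[OF \<epsilon> max vB]
  have T1: "lam i j * f i x * (u (x + (gam i j * x $ i) *\<^sub>R (axis j 1 - axis i 1), t) - u (x, t))
          - lam i j * f i y * (v (y + (gam i j * y $ i) *\<^sub>R (axis j 1 - axis i 1), s) - v (y, s))
          \<le> lam i j * E" if ij: "i \<noteq> j" for i j
  proof -
    have g: "\<bar>gam i j\<bar> \<le> 1" "0 \<le> gam i j" "gam i j \<le> 1" using gam_range[OF ij] by auto
    show ?thesis unfolding E_def
      by (rule term_le[OF less_imp_le[OF lam_pos[OF ij]] fL(1)[of i] fL(2)[of i] f_nonneg[OF x]
            jump_between_in_simplex_D[OF x g(2,3) ij] jump_between_in_simplex_D[OF y g(2,3) ij]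
            jump_targets_lipschitz(1)[OF g(1)]])
  qed
  have T2: "lamO i * f i x * (u (x - (gamO i * x $ i) *\<^sub>R axis i 1, t) - u (x, t))
          - lamO i * f i y * (v (y - (gamO i * y $ i) *\<^sub>R axis i 1, s) - v (y, s)) \<le> lamO i * E" for i
  proof -
    have g: "\<bar>gamO i\<bar> \<le> 1" "0 \<le> gamO i" "gamO i \<le> 1" using gamO_range[of i] by auto
    show ?thesis unfolding E_def
      by (rule term_le[OF less_imp_le[OF lamO_pos] fL(1)[of i] fL(2)[of i] f_nonneg[OF x]
            jump_to_zero_in_simplex_D[OF x g(2,3)] jump_to_zero_in_simplex_D[OF y g(2,3)]
            jump_targets_lipschitz(2)[OF g(1)]])
  qed
  have T3: "lamI j * f0 x * (u (x + (gamI j * x0 x) *\<^sub>R axis j 1, t) - u (x, t))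
          - lamI j * f0 y * (v (y + (gamI j * x0 y) *\<^sub>R axis j 1, s) - v (y, s)) \<le> lamI j * E" for j
  proof -
    have g: "\<bar>gamI j\<bar> \<le> 1" "0 \<le> gamI j" "gamI j \<le> 1" using gamI_range[of j] by auto
    show ?thesis unfolding E_def
      by (rule term_le[OF less_imp_le[OF lamI_pos] f0L(1) f0L(2) f0_nonneg[OF x]
            jump_from_zero_in_simplex_D[OF x g(2,3)] jump_from_zero_in_simplex_D[OF y g(2,3)]
            jump_targets_lipschitz(3)[OF g(1)]])
  qed
  have S1: "(\<Sum>i\<in>UNIV. \<Sum>j\<in>UNIV - {i}. lam i j * f i x * (u (x + (gam i j * x $ i) *\<^sub>R (axis j 1 - axis i 1), t) - u (x, t)))
       - (\<Sum>i\<in>UNIV. \<Sum>j\<in>UNIV - {i}. lam i j * f i y * (v (y + (gam i j * y $ i) *\<^sub>R (axis j 1 - axis i 1), s) - v (y, s)))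
       \<le> (\<Sum>i\<in>UNIV. \<Sum>j\<in>UNIV - {i}. lam i j) * E"
    unfolding sum_subtractf[symmetric] sum_distrib_right by (intro sum_mono T1) auto
  have S2: "(\<Sum>i\<in>UNIV. lamO i * f i x * (u (x - (gamO i * x $ i) *\<^sub>R axis i 1, t) - u (x, t)))
       - (\<Sum>i\<in>UNIV. lamO i * f i y * (v (y - (gamO i * y $ i) *\<^sub>R axis i 1, s) - v (y, s)))
       \<le> (\<Sum>i\<in>UNIV. lamO i) * E"
    unfolding sum_subtractf[symmetric] sum_distrib_right by (intro sum_mono T2)
  have S3: "(\<Sum>j\<in>UNIV. lamI j * f0 x * (u (x + (gamI j * x0 x) *\<^sub>R axis j 1, t) - u (x, t)))
       - (\<Sum>j\<in>UNIV. lamI j * f0 y * (v (y + (gamI j * x0 y) *\<^sub>R axis j 1, s) - v (y, s)))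
       \<le> (\<Sum>j\<in>UNIV. lamI j) * E"
    unfolding sum_subtractf[symmetric] sum_distrib_right by (intro sum_mono T3)
  show ?thesis using S1 S2 S3 unfolding Jop_def E_def[symmetric] by (simp add: algebra_simps)
qed

end

lemma eventually_usc_lsc_diff_less:
  fixes u v :: "'a::metric_space \<Rightarrow> real"
  assumes us: "usc_on A u" and ls: "lsc_on A v"
    and pq: "\<And>n. p n \<in> A" "\<And>n. q n \<in> A" and PQ: "P \<in> A" "Q \<in> A"
    and lim: "p \<longlonglongrightarrow> P" "q \<longlonglongrightarrow> Q" "c \<longlonglongrightarrow> c0" and e: "e > 0"
  shows "\<forall>\<^sub>F n in sequentially. u (p n) - v (q n) - c n < u P - v Q - c0 + e"
proof -
  have "\<forall>\<^sub>F n in sequentially. u (p n) < u P + e/3"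
    using usc_on_tendsto[OF us PQ(1) lim(1) _, of "e/3"] pq e by (simp add: always_eventually)
  moreover have "\<forall>\<^sub>F n in sequentially. v Q - e/3 < v (q n)"
    using lsc_on_tendsto[OF ls PQ(2) lim(2) _, of "e/3"] pq e by (simp add: always_eventually)
  moreover have "\<forall>\<^sub>F n in sequentially. c0 - e/3 < c n"
    using e by (intro order_tendstoD(1)[OF lim(3)]) auto
  ultimately show ?thesis by eventually_elim linarith
qed

lemma compact_attains_max_seq_usc:
  fixes F :: "'a::metric_space \<Rightarrow> real"
  assumes K: "compact K" "K \<noteq> {}" and bdd: "bdd_above (F ` K)"
    and usc: "\<And>X l e. (\<And>n. X n \<in> K) \<Longrightarrow> l \<in> K \<Longrightarrow> X \<longlonglongrightarrow> l \<Longrightarrow> e > 0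
                \<Longrightarrow> \<forall>\<^sub>F n in sequentially. F (X n) < F l + e"
  obtains l where "l \<in> K" "\<And>w. w \<in> K \<Longrightarrow> F w \<le> F l"
proof -
  define M where "M = Sup (F ` K)"
  have "\<exists>w\<in>K. M - 1 / (real n + 1) < F w" for n
  proof -
    have "M - 1 / (real n + 1) < M" by simp
    then show ?thesis unfolding M_def using less_cSup_iff[of "F ` K"] bdd K(2) by auto
  qed
  then obtain W where W: "\<And>n. W n \<in> K" "\<And>n. M - 1 / (real n + 1) < F (W n)" by metis
  obtain l r where l: "l \<in> K" and r: "strict_mono r" and lim: "(W \<circ> r) \<longlonglongrightarrow> l"
    using seq_compactE[OF compact_imp_seq_compact[OF K(1)], of W] W(1) by blast
  have "M \<le> F l"
  proof (rule field_le_epsilon)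
    fix e :: real assume e: "e > 0"
    have "\<forall>\<^sub>F n in sequentially. F ((W \<circ> r) n) < F l + e/2"
      using W(1) l lim e by (intro usc) (auto simp: comp_def)
    moreover have "(\<lambda>n. inverse (real (Suc (r n)))) \<longlonglongrightarrow> 0"
      using LIMSEQ_subseq_LIMSEQ[OF LIMSEQ_inverse_real_of_nat r] by (simp add: o_def)
    then have "\<forall>\<^sub>F n in sequentially. 1 / (real (r n) + 1) < e/2"
      using e by (auto dest: order_tendstoD(2)[of _ 0 _ "e/2"] simp: inverse_eq_divide add.commute)
    ultimately have "\<forall>\<^sub>F n in sequentially. M < F l + e"
    proof eventually_elim
      case (elim n)
      with W(2)[of "r n"] show ?case by simp
    qed
    then show "M \<le> F l + e" using eventually_happens by force
  qed
  moreover have "F w \<le> M" if "w \<in> K" for w unfolding M_def using bdd that by (intro cSup_upper) auto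
  ultimately show ?thesis using that l by force
qed

lemma doubling_nonneg_time_le:
  assumes "p \<in> dom_st" "q \<in> dom_st" "\<eta> \<ge> 0" "\<epsilon> > 0"
    and "\<forall>p\<in>dom_st. \<bar>u p\<bar> \<le> B" "\<forall>p\<in>dom_st. \<bar>v p\<bar> \<le> B"
  shows "doubling u v \<epsilon> \<eta> p q + inner (p - q) (p - q) / (2 * \<epsilon>) + \<eta> * (snd p + snd q) \<le> 2 * B"
proof -
  have "u p \<le> B" "- v q \<le> B" using assms by fastforce+
  then show ?thesis by (simp add: doubling_def)
qed

lemma doubling_lower_bound_consequences:
  assumes "p \<in> dom_st" "q \<in> dom_st" "\<eta> \<ge> 0" "\<epsilon> > 0"
    and "\<forall>p\<in>dom_st. \<bar>u p\<bar> \<le> B" "\<forall>p\<in>dom_st. \<bar>v p\<bar> \<le> B"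
    and "\<delta> \<le> doubling u v \<epsilon> \<eta> p q"
  shows "inner (p - q) (p - q) \<le> (2 * B - \<delta>) * (2 * \<epsilon>)" "\<eta> * (snd p + snd q) \<le> 2 * B - \<delta>"
proof -
  have "0 \<le> \<eta> * (snd p + snd q)" "0 \<le> inner (p - q) (p - q) / (2 * \<epsilon>)"
    using assms(1-4) by (auto simp: dom_st_def)
  moreover note doubling_nonneg_time_le[OF assms(1-6)] assms(7)
  ultimately have "inner (p - q) (p - q) / (2 * \<epsilon>) \<le> 2 * B - \<delta>" "\<eta> * (snd p + snd q) \<le> 2 * B - \<delta>"
    by linarith+
  then show "inner (p - q) (p - q) \<le> (2 * B - \<delta>) * (2 * \<epsilon>)" "\<eta> * (snd p + snd q) \<le> 2 * B - \<delta>"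
    using assms(4) by (simp_all add: pos_divide_le_eq)
qed

lemma doubling_max_exists:
  fixes u v :: "(real^'n) \<times> real \<Rightarrow> real"
  assumes us: "usc_on dom_st u" and ls: "lsc_on dom_st v"
    and uB: "\<forall>p\<in>dom_st. \<bar>u p\<bar> \<le> B" and vB: "\<forall>p\<in>dom_st. \<bar>v p\<bar> \<le> B"
    and \<epsilon>: "\<epsilon> > 0" and \<eta>: "\<eta> > 0"
  obtains p q where "doubling_max u v \<epsilon> \<eta> p q"
proof -
  define F where "F w = doubling u v \<epsilon> \<eta> (fst w) (snd w)" for w :: "((real^'n) \<times> real) \<times> ((real^'n) \<times> real)"
  define T where "T = 4 * B / \<eta> + 1"
  define K :: "(((real^'n) \<times> real) \<times> ((real^'n) \<times> real)) set"
    where "K = (simplex_D \<times> {0..T}) \<times> (simplex_D \<times> {0..T})"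
  have KA: "K \<subseteq> dom_st \<times> dom_st" by (auto simp: K_def dom_st_def)
  have "((0::real^'n), 0::real) \<in> dom_st" by (simp add: dom_st_def simplex_D_def)
  then have "0 \<le> B" using uB by force
  then have origin: "((0, 0), (0, 0)) \<in> K"
    using \<eta> by (auto simp: K_def T_def simplex_D_def)
  have pen: "0 \<le> inner (p - q) (p - q) / (2 * \<epsilon>) + \<eta> * (snd p + snd q)"
    if "p \<in> dom_st" "q \<in> dom_st" for p q
    using that \<epsilon> \<eta> by (auto simp: dom_st_def intro!: add_nonneg_nonneg)
  obtain w where w: "w \<in> K" and wmax: "\<And>w'. w' \<in> K \<Longrightarrow> F w' \<le> F w"
  proof (rule compact_attains_max_seq_usc)
    show "compact K" unfolding K_def by (intro compact_Times compact_simplex_D compact_Icc)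
    show "K \<noteq> {}" using origin by blast
    show "bdd_above (F ` K)"
    proof (rule bdd_aboveI)
      fix y assume "y \<in> F ` K"
      then obtain w where w: "w \<in> K" "y = F w" by blast
      have wA: "fst w \<in> dom_st" "snd w \<in> dom_st" using subsetD[OF KA w(1)] by (simp_all add: mem_Times_iff)
      with pen[OF wA] doubling_nonneg_time_le[OF wA less_imp_le[OF \<eta>] \<epsilon> uB vB] show "y \<le> 2 * B"
        unfolding w F_def by linarith
    qed
  next
    fix X l and e :: real assume X: "\<And>n. X n \<in> K" and l: "l \<in> K" and lim: "X \<longlonglongrightarrow> l" and e: "e > 0"
    have XA: "fst (X n) \<in> dom_st" "snd (X n) \<in> dom_st" for n
      using subsetD[OF KA X[of n]] by (simp_all add: mem_Times_iff)
    have lA: "fst l \<in> dom_st" "snd l \<in> dom_st" using subsetD[OF KA l] by (simp_all add: mem_Times_iff)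
    have "(\<lambda>n. inner (fst (X n) - snd (X n)) (fst (X n) - snd (X n)) / (2 * \<epsilon>) + \<eta> * (snd (fst (X n)) + snd (snd (X n))))
        \<longlonglongrightarrow> inner (fst l - snd l) (fst l - snd l) / (2 * \<epsilon>) + \<eta> * (snd (fst l) + snd (snd l))"
      using \<epsilon> by (intro tendsto_intros lim) simp
    from eventually_usc_lsc_diff_less[OF us ls XA lA tendsto_fst[OF lim] tendsto_snd[OF lim] this e]
    show "\<forall>\<^sub>F n in sequentially. F (X n) < F l + e"
      by (simp add: F_def doubling_def algebra_simps)
  qed blast
  have "doubling u v \<epsilon> \<eta> p q \<le> F w" if p: "p \<in> dom_st" and q: "q \<in> dom_st" for p q
  proof (cases "(p, q) \<in> K")
    case True then show ?thesis using wmax[of "(p, q)"] by (simp add: F_def)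
  next
    case False
    then have "snd p > T \<or> snd q > T" using p q by (cases p, cases q) (auto simp: K_def dom_st_def)
    moreover have "snd p \<ge> 0" "snd q \<ge> 0" using p q by (auto simp: dom_st_def)
    ultimately have "\<eta> * T \<le> \<eta> * (snd p + snd q)" using \<eta> by (intro mult_left_mono) auto
    moreover have "\<eta> * T = 4 * B + \<eta>" using \<eta> by (simp add: T_def field_simps)
    moreover have "0 \<le> inner (p - q) (p - q) / (2 * \<epsilon>)" using \<epsilon> by simp
    moreover have "- 2 * B \<le> F ((0, 0), (0, 0))"
      using uB vB origin KA by (force simp: F_def doubling_def abs_le_iff)
    ultimately have "doubling u v \<epsilon> \<eta> p q \<le> F ((0, 0), (0, 0))"
      using doubling_nonneg_time_le[OF p q less_imp_le[OF \<eta>] \<epsilon> uB vB] \<eta> by linarith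
    then show ?thesis using wmax[OF origin] by linarith
  qed
  then have "doubling_max u v \<epsilon> \<eta> (fst w) (snd w)"
    using w KA by (auto simp: doubling_max_def F_def mem_Times_iff)
  then show ?thesis by (rule that)
qed


lemma doubling_max_limit:
  fixes u v :: "(real^'n) \<times> real \<Rightarrow> real"
  assumes us: "usc_on dom_st u" and ls: "lsc_on dom_st v"
    and uB: "\<forall>p\<in>dom_st. \<bar>u p\<bar> \<le> B" and vB: "\<forall>p\<in>dom_st. \<bar>v p\<bar> \<le> B" and \<eta>: "\<eta> \<ge> 0"
    and en: "\<And>n. en n > 0" "en \<longlonglongrightarrow> 0"
    and max: "\<And>n. doubling_max u v (en n) \<eta> (p n) (q n)"
    and val: "\<And>n. \<delta> \<le> doubling u v (en n) \<eta> (p n) (q n)"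
    and lim: "p \<longlonglongrightarrow> L" "q \<longlonglongrightarrow> L'" and L: "L \<in> dom_st"
  shows "L' = L" "(\<lambda>n. inner (p n - q n) (p n - q n) / (2 * en n)) \<longlonglongrightarrow> 0"
    "\<delta> \<le> u L - v L - 2 * \<eta> * snd L"
proof -
  define P where "P n = inner (p n - q n) (p n - q n) / (2 * en n)" for n
  define G where "G n = u (p n) - v (q n) - \<eta> * (snd (p n) + snd (q n))" for n
  define A where "A = u L - v L - 2 * \<eta> * snd L"
  have pq: "p n \<in> dom_st" "q n \<in> dom_st" for n using max[of n] by (simp_all add: doubling_max_def)
  have P: "0 \<le> P n" for n using en(1)[of n] by (simp add: P_def)
  have GP: "doubling u v (en n) \<eta> (p n) (q n) = G n - P n" for n by (simp add: doubling_def G_def P_def)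
  note PP_le = doubling_lower_bound_consequences(1)[OF pq \<eta> en(1) uB vB val]
  have "(\<lambda>n. inner (p n - q n) (p n - q n)) \<longlonglongrightarrow> 0"
  proof (rule tendsto_sandwich[of "\<lambda>n. 0" _ _ "\<lambda>n. (2 * B - \<delta>) * (2 * en n)"])
    show "\<forall>\<^sub>F n in sequentially. 0 \<le> inner (p n - q n) (p n - q n)" by simp
    show "\<forall>\<^sub>F n in sequentially. inner (p n - q n) (p n - q n) \<le> (2 * B - \<delta>) * (2 * en n)"
      using PP_le by (intro always_eventually allI)
    show "(\<lambda>n. (2 * B - \<delta>) * (2 * en n)) \<longlonglongrightarrow> 0"
      using tendsto_mult_left[OF tendsto_mult_left[OF en(2)], of "2 * B - \<delta>" 2] by simp
  qed simp
  moreover have "(\<lambda>n. inner (p n - q n) (p n - q n)) \<longlonglongrightarrow> inner (L - L') (L - L')"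
    by (intro tendsto_intros lim)
  ultimately have "inner (L - L') (L - L') = 0" using LIMSEQ_unique by blast
  then show L': "L' = L" by simp
  have GA: "A \<le> G n - P n" for n
  proof -
    have "doubling u v (en n) \<eta> L L \<le> doubling u v (en n) \<eta> (p n) (q n)"
      using max[of n] L by (simp add: doubling_max_def)
    moreover have "doubling u v (en n) \<eta> L L = A" by (simp add: doubling_def A_def)
    ultimately show ?thesis by (simp add: GP)
  qed
  have "(\<lambda>n. \<eta> * (snd (p n) + snd (q n))) \<longlonglongrightarrow> \<eta> * (snd L + snd L)"
    by (intro tendsto_intros lim(1) lim(2)[unfolded L'])
  then have time_lim: "(\<lambda>n. \<eta> * (snd (p n) + snd (q n))) \<longlonglongrightarrow> 2 * \<eta> * snd L"
    by (simp add: algebra_simps)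
  have Gev: "\<forall>\<^sub>F n in sequentially. G n < A + e" if "e > 0" for e
    using eventually_usc_lsc_diff_less[OF us ls pq L L lim(1) lim(2)[unfolded L'] time_lim that]
    by (simp add: G_def A_def)
  show "(\<lambda>n. inner (p n - q n) (p n - q n) / (2 * en n)) \<longlonglongrightarrow> 0"
  proof (rule order_tendstoI)
    fix a :: real assume "a < 0"
    then show "\<forall>\<^sub>F n in sequentially. a < inner (p n - q n) (p n - q n) / (2 * en n)"
      using P by (intro always_eventually allI) (simp add: P_def less_le_trans)
  next
    fix a :: real assume "0 < a"
    from Gev[OF this] show "\<forall>\<^sub>F n in sequentially. inner (p n - q n) (p n - q n) / (2 * en n) < a"
    proof (rule eventually_mono)
      fix n assume "G n < A + a"
      with GA[of n] show "inner (p n - q n) (p n - q n) / (2 * en n) < a" unfolding P_def by linarith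
    qed
  qed
  have "\<delta> \<le> A + e" if e: "e > 0" for e
  proof -
    obtain n where "G n < A + e" using eventually_happens[OF Gev[OF e]] by auto
    then show ?thesis using val[of n] P[of n] unfolding GP by linarith
  qed
  then show "\<delta> \<le> u L - v L - 2 * \<eta> * snd L" unfolding A_def by (rule field_le_epsilon)
qed

lemma doubling_maximizers_converge:
  fixes u v :: "(real^'n) \<times> real \<Rightarrow> real"
  assumes us: "usc_on dom_st u" and ls: "lsc_on dom_st v"
    and uB: "\<forall>p\<in>dom_st. \<bar>u p\<bar> \<le> B" and vB: "\<forall>p\<in>dom_st. \<bar>v p\<bar> \<le> B" and \<eta>: "\<eta> > 0"
    and z: "z \<in> dom_st"
  obtains en p q L where "\<And>n. en n > 0" "\<And>n. doubling_max u v (en n) \<eta> (p n) (q n)"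
    "p \<longlonglongrightarrow> L" "q \<longlonglongrightarrow> L" "L \<in> dom_st"
    "(\<lambda>n. inner (p n - q n) (p n - q n) / (2 * en n)) \<longlonglongrightarrow> 0"
    "u z - v z - 2 * \<eta> * snd z \<le> u L - v L - 2 * \<eta> * snd L"
proof -
  define \<delta> where "\<delta> = u z - v z - 2 * \<eta> * snd z"
  define \<epsilon> where "\<epsilon> n = 1 / (real n + 1)" for n
  have \<epsilon>: "\<epsilon> n > 0" for n by (simp add: \<epsilon>_def)
  have "\<exists>p q. doubling_max u v (\<epsilon> n) \<eta> p q" for n
    using doubling_max_exists[OF us ls uB vB \<epsilon> \<eta>] by blast
  then obtain P Q where PQ: "\<And>n. doubling_max u v (\<epsilon> n) \<eta> (P n) (Q n)" by metis
  have val: "\<delta> \<le> doubling u v (\<epsilon> n) \<eta> (P n) (Q n)" for n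
  proof -
    have "doubling u v (\<epsilon> n) \<eta> z z \<le> doubling u v (\<epsilon> n) \<eta> (P n) (Q n)"
      using PQ[of n] z by (simp add: doubling_max_def)
    then show ?thesis by (simp add: doubling_def \<delta>_def)
  qed
  define K :: "(((real^'n) \<times> real) \<times> ((real^'n) \<times> real)) set"
    where "K = (simplex_D \<times> {0..(2 * B - \<delta>) / \<eta>}) \<times> (simplex_D \<times> {0..(2 * B - \<delta>) / \<eta>})"
  have PQK: "(P n, Q n) \<in> K" for n
  proof -
    have A: "P n \<in> dom_st" "Q n \<in> dom_st" using PQ[of n] by (simp_all add: doubling_max_def)
    have "\<eta> * (snd (P n) + snd (Q n)) \<le> 2 * B - \<delta>"
      by (rule doubling_lower_bound_consequences(2)[OF A less_imp_le[OF \<eta>] \<epsilon> uB vB val])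
    moreover have "0 \<le> \<eta> * snd (P n)" "0 \<le> \<eta> * snd (Q n)" using A \<eta> by (auto simp: dom_st_def)
    ultimately have "\<eta> * snd (P n) \<le> 2 * B - \<delta>" "\<eta> * snd (Q n) \<le> 2 * B - \<delta>"
      unfolding distrib_left by linarith+
    then have "snd (P n) \<le> (2 * B - \<delta>) / \<eta>" "snd (Q n) \<le> (2 * B - \<delta>) / \<eta>"
      using \<eta> by (simp_all add: pos_le_divide_eq mult.commute)
    with A show ?thesis by (cases "P n", cases "Q n") (auto simp: K_def dom_st_def)
  qed
  moreover have "compact K" unfolding K_def by (intro compact_Times compact_simplex_D compact_Icc)
  ultimately obtain l r where l: "l \<in> K" and r: "strict_mono r" and lim: "((\<lambda>n. (P n, Q n)) \<circ> r) \<longlonglongrightarrow> l"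
    using seq_compactE[OF compact_imp_seq_compact, of K "\<lambda>n. (P n, Q n)"] PQK by blast
  have L: "fst l \<in> dom_st" "snd l \<in> dom_st" using l by (auto simp: K_def dom_st_def)
  have plim: "(\<lambda>n. P (r n)) \<longlonglongrightarrow> fst l" and qlim: "(\<lambda>n. Q (r n)) \<longlonglongrightarrow> snd l"
    using tendsto_fst[OF lim] tendsto_snd[OF lim] by (simp_all add: o_def)
  have en: "(\<lambda>n. \<epsilon> (r n)) \<longlonglongrightarrow> 0"
    using LIMSEQ_subseq_LIMSEQ[OF LIMSEQ_inverse_real_of_nat r]
    by (simp add: o_def \<epsilon>_def inverse_eq_divide add.commute)
  note limit = doubling_max_limit[OF us ls uB vB less_imp_le[OF \<eta>] \<epsilon> en PQ val plim qlim L(1)]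
  show ?thesis
    by (rule that[OF \<epsilon> PQ plim qlim[unfolded limit(1)] L(1) limit(2) limit(3)[unfolded \<delta>_def]])
qed

lemma doubling_estimate_arith:
  fixes \<eta> I \<epsilon> JJ \<Lambda> Bf K N Lf B nz Ld P :: real
  assumes \<epsilon>: "\<epsilon> > 0" and visc: "2 * \<eta> + I / \<epsilon> \<le> JJ"
    and jump: "JJ \<le> \<Lambda> * (Bf * K * N / (2 * \<epsilon>) + Lf * 2 * B * nz)"
    and drift: "\<bar>I\<bar> \<le> Ld * N" and N: "0 \<le> N" "N \<le> P"
    and nonneg: "\<Lambda> \<ge> 0" "Bf \<ge> 0" "K \<ge> 0" "Ld \<ge> 0"
  shows "2 * \<eta> \<le> (2 * Ld + \<Lambda> * Bf * K) * (P / (2 * \<epsilon>)) + 2 * \<Lambda> * Lf * B * nz"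
proof -
  have "- I \<le> Ld * N" using drift by linarith
  then have "- (I / \<epsilon>) \<le> Ld * N / \<epsilon>" using divide_right_mono[of "- I" "Ld * N" \<epsilon>] \<epsilon> by simp
  also have "\<dots> \<le> 2 * Ld * (P / (2 * \<epsilon>))" using N nonneg \<epsilon> by (simp add: divide_right_mono mult_left_mono)
  finally have h1: "- (I / \<epsilon>) \<le> 2 * Ld * (P / (2 * \<epsilon>))" .
  have "Bf * K * N / (2 * \<epsilon>) \<le> Bf * K * (P / (2 * \<epsilon>))"
    using N nonneg \<epsilon> by (simp add: divide_right_mono mult_left_mono)
  then have "\<Lambda> * (Bf * K * N / (2 * \<epsilon>)) \<le> \<Lambda> * (Bf * K * (P / (2 * \<epsilon>)))"
    using nonneg(1) by (rule mult_left_mono)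
  then have h2: "\<Lambda> * (Bf * K * N / (2 * \<epsilon>)) \<le> \<Lambda> * Bf * K * (P / (2 * \<epsilon>))"
    by (simp only: mult.assoc)
  show ?thesis using visc jump h1 h2 by (simp add: algebra_simps)
qed

locale lipschitz_jump_process = jump_process f0 f lam gam lamO lamI gamO gamI
  for f0 :: "real^'n \<Rightarrow> real" and f :: "'n \<Rightarrow> real^'n \<Rightarrow> real"
    and lam gam :: "'n \<Rightarrow> 'n \<Rightarrow> real" and lamO lamI gamO gamI :: "'n \<Rightarrow> real" +
  assumes f0_lip: "\<exists>C. C-lipschitz_on simplex_D f0"
    and f_lip: "\<And>k. \<exists>C. C-lipschitz_on simplex_D (f k)"
begin

lemma rates_lipschitz_bounded:
  "lipschitz_bounded_on simplex_D f0" "lipschitz_bounded_on simplex_D (f k)"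
proof -
  obtain C where "C-lipschitz_on simplex_D f0" using f0_lip by blast
  then show "lipschitz_bounded_on simplex_D f0"
    by (rule lipschitz_bounded_on_lipschitz_on[OF bounded_simplex_D])
  obtain C' where "C'-lipschitz_on simplex_D (f k)" using f_lip by blast
  then show "lipschitz_bounded_on simplex_D (f k)"
    by (rule lipschitz_bounded_on_lipschitz_on[OF bounded_simplex_D])
qed

lemma doubling_max_estimate:
  fixes u v :: "(real^'n) \<times> real \<Rightarrow> real"
  assumes sub: "visc_sub f0 f lam lamO lamI gam gamO gamI u"
    and super: "visc_super f0 f lam lamO lamI gam gamO gamI v"
    and vB: "\<forall>p\<in>dom_st. \<bar>v p\<bar> \<le> B"
  obtains C where "\<And>\<epsilon> \<eta> x t y s. \<epsilon> > 0 \<Longrightarrow> t > 0 \<Longrightarrow> s > 0 \<Longrightarrow> doubling_max u v \<epsilon> \<eta> (x, t) (y, s) \<Longrightarrow>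
    2 * \<eta> \<le> C * (inner ((x, t) - (y, s)) ((x, t) - (y, s)) / (2 * \<epsilon>) + norm (x - y))"
proof -
  define g where "g i = (case i of None \<Rightarrow> f0 | Some k \<Rightarrow> f k)" for i
  have "lipschitz_bounded_on simplex_D (g i)" for i
    by (cases i) (simp_all add: g_def rates_lipschitz_bounded)
  then obtain Lf Bf where Bf: "Bf \<ge> 0"
    and rate: "\<And>i x y. x \<in> simplex_D \<Longrightarrow> y \<in> simplex_D \<Longrightarrow> \<bar>g i x - g i y\<bar> \<le> Lf * norm (x - y)"
    and rate_bound: "\<And>i x. x \<in> simplex_D \<Longrightarrow> \<bar>g i x\<bar> \<le> Bf"
    by (rule lipschitz_bounded_on_uniform[of simplex_D g]) blast
  obtain Ld where Ld: "Ld \<ge> 0" and drift: "\<And>x y. x \<in> simplex_D \<Longrightarrow> y \<in> simplex_D \<Longrightarrow>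
      \<bar>inner (x - y) (drift f0 f x - drift f0 f y)\<bar> \<le> Ld * inner (x - y) (x - y)"
    by (rule drift_inner_bound[of f0 f, OF rates_lipschitz_bounded(1) rates_lipschitz_bounded(2)]) blast
  define \<Lambda> where "\<Lambda> = (\<Sum>i\<in>UNIV. \<Sum>j\<in>UNIV - {i}. lam i j) + (\<Sum>i\<in>UNIV. lamO i) + (\<Sum>j\<in>UNIV. lamI j)"
  have \<Lambda>: "\<Lambda> \<ge> 0" unfolding \<Lambda>_def using lam_pos lamO_pos lamI_pos
    by (intro add_nonneg_nonneg sum_nonneg) (auto simp: less_imp_le)
  define K where "K = (1 + 2 * real CARD('n))\<^sup>2"
  define C1 where "C1 = 2 * Ld + \<Lambda> * Bf * K"
  define C2 where "C2 = 2 * \<Lambda> * Lf * B"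
  show ?thesis
  proof (rule that[of "\<bar>C1\<bar> + \<bar>C2\<bar>"])
    fix \<epsilon> \<eta> x t y s
    assume \<epsilon>: "\<epsilon> > 0" and t: "t > 0" and s: "s > 0" and max: "doubling_max u v \<epsilon> \<eta> (x, t) (y, s)"
    define P where "P = inner ((x, t) - (y, s)) ((x, t) - (y, s))"
    have x: "x \<in> simplex_D" and y: "y \<in> simplex_D" using max by (auto simp: doubling_max_def dom_st_def)
    have "2 * \<eta> \<le> C1 * (P / (2 * \<epsilon>)) + C2 * norm (x - y)"
      unfolding C1_def C2_def
    proof (rule doubling_estimate_arith[OF \<epsilon> doubling_max_visc_ineq[OF sub super \<epsilon> t s max]
          _ drift[OF x y] _ _ \<Lambda> Bf _ Ld])
      show "J (\<lambda>x'. u (x', t)) x - J (\<lambda>y'. v (y', s)) y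
          \<le> \<Lambda> * (Bf * K * inner (x - y) (x - y) / (2 * \<epsilon>) + Lf * 2 * B * norm (x - y))"
        unfolding \<Lambda>_def K_def
        using Jop_difference_le[OF \<epsilon> max vB, of Lf Bf] rate[OF x y, of None] rate[OF x y, of "Some _"]
          rate_bound[OF x, of None] rate_bound[OF x, of "Some _"]
        by (simp add: g_def)
    qed (auto simp: K_def P_def)
    also have "\<dots> \<le> \<bar>C1\<bar> * (P / (2 * \<epsilon>)) + \<bar>C2\<bar> * norm (x - y)"
      using \<epsilon> by (intro add_mono mult_right_mono) (auto simp: P_def)
    also have "\<dots> \<le> (\<bar>C1\<bar> + \<bar>C2\<bar>) * (P / (2 * \<epsilon>) + norm (x - y))"
    proof -
      have "0 \<le> P / (2 * \<epsilon>)" using \<epsilon> by (simp add: P_def)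
      then have "0 \<le> \<bar>C2\<bar> * (P / (2 * \<epsilon>))" "0 \<le> \<bar>C1\<bar> * norm (x - y)"
        by (simp_all only: mult_nonneg_nonneg abs_ge_zero norm_ge_zero)
      then show ?thesis unfolding distrib_left distrib_right by linarith
    qed
    finally show "2 * \<eta> \<le> (\<bar>C1\<bar> + \<bar>C2\<bar>) * (P / (2 * \<epsilon>) + norm (x - y))" .
  qed
qed

lemma comparison_principle:
  fixes u v :: "(real^'n) \<times> real \<Rightarrow> real"
  assumes sub: "visc_sub f0 f lam lamO lamI gam gamO gamI u"
    and super: "visc_super f0 f lam lamO lamI gam gamO gamI v"
    and init: "\<And>x. x \<in> simplex_D \<Longrightarrow> u (x, 0) \<le> v (x, 0)"
  shows "\<forall>x\<in>simplex_D. \<forall>t>0. u (x, t) \<le> v (x, t)"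
proof (rule ccontr)
  assume "\<not> ?thesis"
  then obtain x1 t1 where z: "(x1, t1) \<in> dom_st" and t1: "t1 > 0" and gt: "u (x1, t1) > v (x1, t1)"
    by (auto simp: dom_st_def not_le)
  have us: "usc_on dom_st u" and ls: "lsc_on dom_st v"
    using sub super by (simp_all add: visc_sub_def visc_super_def)
  obtain Bu Bv where "\<forall>p\<in>dom_st. \<bar>u p\<bar> \<le> Bu" "\<forall>p\<in>dom_st. \<bar>v p\<bar> \<le> Bv"
    using sub super unfolding visc_sub_def visc_super_def bounded_iff by (auto simp: ball_simps)
  then have uB: "\<forall>p\<in>dom_st. \<bar>u p\<bar> \<le> \<bar>Bu\<bar> + \<bar>Bv\<bar>" and vB: "\<forall>p\<in>dom_st. \<bar>v p\<bar> \<le> \<bar>Bu\<bar> + \<bar>Bv\<bar>"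
    by force+
  define \<eta> where "\<eta> = (u (x1, t1) - v (x1, t1)) / (4 * t1)"
    \<comment> \<open>so that the penalized gap at the diagonal point \<open>(x1, t1)\<close> is still half of \<open>u - v\<close> there\<close>
  have \<eta>: "\<eta> > 0" using gt t1 by (simp add: \<eta>_def)
  obtain C where C: "\<And>\<epsilon> x t y s. \<epsilon> > 0 \<Longrightarrow> t > 0 \<Longrightarrow> s > 0 \<Longrightarrow> doubling_max u v \<epsilon> \<eta> (x, t) (y, s) \<Longrightarrow>
      2 * \<eta> \<le> C * (inner ((x, t) - (y, s)) ((x, t) - (y, s)) / (2 * \<epsilon>) + norm (x - y))"
    using doubling_max_estimate[OF sub super vB] by metis
  obtain en p q L where en: "\<And>n. en n > 0" and max: "\<And>n. doubling_max u v (en n) \<eta> (p n) (q n)"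
    and plim: "p \<longlonglongrightarrow> L" and qlim: "q \<longlonglongrightarrow> L" and L: "L \<in> dom_st"
    and pen: "(\<lambda>n. inner (p n - q n) (p n - q n) / (2 * en n)) \<longlonglongrightarrow> 0"
    and gap: "u (x1, t1) - v (x1, t1) - 2 * \<eta> * snd (x1, t1) \<le> u L - v L - 2 * \<eta> * snd L"
    by (rule doubling_maximizers_converge[OF us ls uB vB \<eta> z]) blast
  have "snd L > 0"
  proof (rule ccontr)
    assume "\<not> snd L > 0"
    with L have "L = (fst L, 0)" "fst L \<in> simplex_D" by (auto simp: dom_st_def prod_eq_iff)
    then have "u L \<le> v L" using init by metis
    moreover have "u (x1, t1) - v (x1, t1) - 2 * \<eta> * t1 > 0" using gt t1 by (simp add: \<eta>_def)
    ultimately show False using gap \<open>\<not> snd L > 0\<close> L by (auto simp: dom_st_def)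
  qed
  then have "\<forall>\<^sub>F n in sequentially. snd (p n) > 0 \<and> snd (q n) > 0"
    using order_tendstoD(1)[OF tendsto_snd[OF plim]] order_tendstoD(1)[OF tendsto_snd[OF qlim]]
    by (auto intro: eventually_conj)
  moreover have "(\<lambda>n. C * (inner (p n - q n) (p n - q n) / (2 * en n) + norm (fst (p n) - fst (q n))))
      \<longlonglongrightarrow> C * (0 + norm (fst L - fst L))"
    by (intro tendsto_intros pen plim qlim)
  then have "\<forall>\<^sub>F n in sequentially.
      C * (inner (p n - q n) (p n - q n) / (2 * en n) + norm (fst (p n) - fst (q n))) < 2 * \<eta>"
    using \<eta> by (intro order_tendstoD(2)) auto
  ultimately have "\<forall>\<^sub>F n in sequentially. False"
  proof eventually_elim
    case (elim n)
    with C[where \<epsilon> = "en n" and x = "fst (p n)" and t = "snd (p n)" and y = "fst (q n)" and s = "snd (q n)"]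
      en[of n] max[of n]
    show False by simp
  qed
  then show False by simp
qed

end

theorem proposition3p6:
  fixes f0 :: "real^'n \<Rightarrow> real" and f :: "'n \<Rightarrow> real^'n \<Rightarrow> real"
    and lam gam :: "'n \<Rightarrow> 'n \<Rightarrow> real" and lamO lamI gamO gamI :: "'n \<Rightarrow> real"
    and u v :: "(real^'n) \<times> real \<Rightarrow> real"
  assumes f0_lip: "\<exists>C. C-lipschitz_on simplex_D f0"
    and f_lip: "\<And>k. \<exists>C. C-lipschitz_on simplex_D (f k)"
    and f0_nonneg: "\<And>x. x \<in> simplex_D \<Longrightarrow> f0 x \<ge> 0"
    and f_nonneg: "\<And>k x. x \<in> simplex_D \<Longrightarrow> f k x \<ge> 0"
    and lam_pos: "\<And>i j. i \<noteq> j \<Longrightarrow> lam i j > 0"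
    and lamO_pos: "\<And>i. lamO i > 0"
    and lamI_pos: "\<And>j. lamI j > 0"
    and gam_range: "\<And>i j. i \<noteq> j \<Longrightarrow> 0 < gam i j \<and> gam i j \<le> 1"
    and gamO_range: "\<And>i. 0 < gamO i \<and> gamO i \<le> 1"
    and gamI_range: "\<And>j. 0 < gamI j \<and> gamI j \<le> 1"
    and sub: "visc_sub f0 f lam lamO lamI gam gamO gamI u"
    and super: "visc_super f0 f lam lamO lamI gam gamO gamI v"
    and init: "\<And>x. x \<in> simplex_D \<Longrightarrow> u (x, 0) \<le> v (x, 0)"
  shows "\<forall>x\<in>simplex_D. \<forall>t>0. u (x, t) \<le> v (x, t)"
proof -
  interpret lipschitz_jump_process f0 f lam gam lamO lamI gamO gamI
    by unfold_locales (fact f0_nonneg f_nonneg lam_pos lamO_pos lamI_pos gam_range gamO_range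
                         gamI_range f0_lip f_lip)+
  show ?thesis by (rule comparison_principle[OF sub super init])
qed

end
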